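(* Let $K$ be as in the context and let $F=a_1x_1^4+\cdots+a_{11}x_{11}^4$ with all $a_i\in K\setminus\{0\}$. If $F$ is of type $(7,0,0,1)$, then $F$ has a nontrivial zero in $K^{11}$.
   Context: $K$ is one of $\mathbb{Q}_2(\sqrt2),\mathbb{Q}_2(\sqrt{10}),\mathbb{Q}_2(\sqrt{-2}),\mathbb{Q}_2(\sqrt{-10})$, with uniformizer $\pi$ and valuation $v_\pi$. The level of the variable $x_i$ is $v_\pi(a_i)$, considered modulo $4$. For nonnegative integers $s_0,s_1,s_2,s_3$, the form is said to be of type $(s_0,s_1,s_2,s_3)$ if there exists $j\in\mathbb{Z}/4$ such that for each $i\in\{0,1,2,3\}$ the number of variables whose level is congruent to $i+j$ modulo $4$ is at least $s_i$ (so types differing by a cyclic permutation of the entries are the same type). *)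

theory Defs
  imports Main
begin

text \<open>An element of Z_2 is represented by the sequence of its residues
  x n in [0, 2^n) modulo 2^n, which are coherent: x (n+1) mod 2^n = x n.\<close>

type_synonym z2 = "nat \<Rightarrow> int"

definition Z2 :: "z2 set" where
  "Z2 = {x. \<forall>n. 0 \<le> x n \<and> x n < 2 ^ n \<and> x (Suc n) mod 2 ^ n = x n}"

definition z2_of_int :: "int \<Rightarrow> z2" where
  "z2_of_int c = (\<lambda>n. c mod 2 ^ n)"

definition z2_zero :: z2 where
  "z2_zero = z2_of_int 0"

definition z2_add :: "z2 \<Rightarrow> z2 \<Rightarrow> z2" where
  "z2_add x y = (\<lambda>n. (x n + y n) mod 2 ^ n)"

definition z2_mul :: "z2 \<Rightarrow> z2 \<Rightarrow> z2" where
  "z2_mul x y = (\<lambda>n. (x n * y n) mod 2 ^ n)"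

text \<open>2-adic valuation of a nonzero element of Z_2 (largest j with x j = 0).\<close>
definition z2_val :: "z2 \<Rightarrow> nat" where
  "z2_val x = (LEAST n. x (Suc n) \<noteq> 0)"

text \<open>Division by 2^j (meaningful when 2^j divides x, i.e. x j = 0).\<close>
definition z2_shift :: "nat \<Rightarrow> z2 \<Rightarrow> z2" where
  "z2_shift j x = (\<lambda>n. x (n + j) div 2 ^ j)"

text \<open>An element of Q_2 is a pair (k, z) standing for z / 2^k, with z in Z_2,
  in normal form: k = 0 or z is a unit (odd).\<close>

type_synonym q2 = "nat \<times> z2"

definition Q2 :: "q2 set" where
  "Q2 = {(k, z). z \<in> Z2 \<and> (k = 0 \<or> odd (z 1))}"

definition q2_norm :: "nat \<Rightarrow> z2 \<Rightarrow> q2" where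
  "q2_norm k z = (if z = z2_zero then (0, z2_zero)
                  else (let j = min k (z2_val z) in (k - j, z2_shift j z)))"

definition q2_zero :: q2 where
  "q2_zero = (0, z2_zero)"

definition q2_of_int :: "int \<Rightarrow> q2" where
  "q2_of_int c = (0, z2_of_int c)"

definition q2_add :: "q2 \<Rightarrow> q2 \<Rightarrow> q2" where
  "q2_add x y = (case x of (k, z) \<Rightarrow> case y of (l, w) \<Rightarrow>
     q2_norm (k + l) (z2_add (z2_mul (z2_of_int (2 ^ l)) z) (z2_mul (z2_of_int (2 ^ k)) w)))"

definition q2_mul :: "q2 \<Rightarrow> q2 \<Rightarrow> q2" where
  "q2_mul x y = (case x of (k, z) \<Rightarrow> case y of (l, w) \<Rightarrow> q2_norm (k + l) (z2_mul z w))"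

definition q2_val :: "q2 \<Rightarrow> int" where
  "q2_val x = (case x of (k, z) \<Rightarrow> int (z2_val z) - int k)"

text \<open>An element (p, q) stands for p + q * sqrt d.\<close>

type_synonym qk = "q2 \<times> q2"

definition Kset :: "qk set" where
  "Kset = Q2 \<times> Q2"

definition K_zero :: qk where
  "K_zero = (q2_zero, q2_zero)"

definition K_add :: "qk \<Rightarrow> qk \<Rightarrow> qk" where
  "K_add x y = (case x of (p, q) \<Rightarrow> case y of (r, s) \<Rightarrow> (q2_add p r, q2_add q s))"

definition K_mul :: "int \<Rightarrow> qk \<Rightarrow> qk \<Rightarrow> qk" where
  "K_mul d x y = (case x of (p, q) \<Rightarrow> case y of (r, s) \<Rightarrow>
     (q2_add (q2_mul p r) (q2_mul (q2_of_int d) (q2_mul q s)),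
      q2_add (q2_mul p s) (q2_mul q r)))"

fun K_pow :: "int \<Rightarrow> qk \<Rightarrow> nat \<Rightarrow> qk" where
  "K_pow d x 0 = (q2_of_int 1, q2_zero)"
| "K_pow d x (Suc n) = K_mul d x (K_pow d x n)"

definition K_sum :: "(nat \<Rightarrow> qk) \<Rightarrow> nat list \<Rightarrow> qk" where
  "K_sum f is = foldr (\<lambda>i acc. K_add (f i) acc) is K_zero"

text \<open>Normalized valuation v_pi of a nonzero element of K, for the uniformizer
  pi = sqrt d (d in {2,10,-2,-10}, so K/Q_2 is ramified, v_pi(2) = 2, v_pi(sqrt d) = 1):
  v_pi(p + q sqrt d) = min(2 v_2(p), 2 v_2(q) + 1).\<close>
definition K_val :: "qk \<Rightarrow> int" where
  "K_val x = (case x of (p, q) \<Rightarrow>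
     if p = q2_zero then 2 * q2_val q + 1
     else if q = q2_zero then 2 * q2_val p
     else min (2 * q2_val p) (2 * q2_val q + 1))"

definition level :: "(nat \<Rightarrow> qk) \<Rightarrow> nat \<Rightarrow> int" where
  "level a i = K_val (a i) mod 4"

definition of_type :: "(nat \<Rightarrow> qk) \<Rightarrow> nat set \<Rightarrow> (nat \<Rightarrow> nat) \<Rightarrow> bool" where
  "of_type a I s = (\<exists>j::int. \<forall>i<4.
     card {m \<in> I. level a m = (int i + j) mod 4} \<ge> s i)"

end

theory Submission
  imports Defs "HOL-Library.Product_Plus"
begin

text \<open>Write \<pi> = \<surd>d; it is a uniformizer of K, and 4 = \<pi>^4 \<cdot> unit. After rescaling the
  coefficients and the variables by powers of \<pi>, seven variables carry unit coefficients
  u_1, ..., u_7 and one carries a coefficient V of valuation 3. Fourth powers of units are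
  \<equiv> 1 modulo \<pi>^5 and fill out exactly 1 + H modulo \<pi>^9, for an explicit subgroup H of index 2
  in \<pi>^5 \<int>[\<surd>d]. By pigeonhole two disjoint pairs of the u_i are congruent modulo \<pi>^3;
  together with the free terms \<pi>^4 u_i and V this allows one to solve the form modulo \<pi>^9 with
  a unit value in one variable, by a case analysis on parities. Hensel's lemma, which needs a
  congruence modulo \<pi>^(2 v(4) + 1) = \<pi>^9, lifts it to a 2-adic solution. Everything is computed in
  \<int>[\<surd>d] on integer approximations of elements of K, and the solution is assembled from a
  coherent sequence of approximations.\<close>

section \<open>Arithmetic in \<int>[\<surd>d] and the \<pi>-adic valuation\<close>

text \<open>A pair (a, b) stands for a + b \<surd>d. Since d \<equiv> 2 (mod 4), \<pi>^2 = d is 2 times a unit,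
  so \<pi>^m divides a + b \<surd>d iff 2^\<lceil>m/2\<rceil> divides a and 2^\<lfloor>m/2\<rfloor> divides b.\<close>

type_synonym zsqrt = "int \<times> int"

definition zmul :: "int \<Rightarrow> zsqrt \<Rightarrow> zsqrt \<Rightarrow> zsqrt" where
  "zmul d x y = (fst x * fst y + d * snd x * snd y, fst x * snd y + snd x * fst y)"

fun zpow :: "int \<Rightarrow> zsqrt \<Rightarrow> nat \<Rightarrow> zsqrt" where
  "zpow d x 0 = (1, 0)"
| "zpow d x (Suc n) = zmul d x (zpow d x n)"

definition pi_dvd :: "nat \<Rightarrow> zsqrt \<Rightarrow> bool" where
  "pi_dvd m x \<longleftrightarrow> 2 ^ ((m + 1) div 2) dvd fst x \<and> 2 ^ (m div 2) dvd snd x"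

definition pi_exact :: "nat \<Rightarrow> zsqrt \<Rightarrow> bool" where
  "pi_exact m x \<longleftrightarrow> pi_dvd m x \<and> \<not> pi_dvd (Suc m) x"

definition zunit :: "zsqrt \<Rightarrow> bool" where "zunit x \<longleftrightarrow> odd (fst x)"

lemma fst_zmul[simp]: "fst (zmul d x y) = fst x * fst y + d * snd x * snd y" by (simp add: zmul_def)
lemma snd_zmul[simp]: "snd (zmul d x y) = fst x * snd y + snd x * fst y" by (simp add: zmul_def)

lemma zmul_eqI: "fst a = fst b \<Longrightarrow> snd a = snd b \<Longrightarrow> a = b" by (simp add: prod_eq_iff)

lemma zmul_comm: "zmul d x y = zmul d y x" by (rule zmul_eqI) (simp_all add: algebra_simps)
lemma zmul_assoc: "zmul d (zmul d x y) z = zmul d x (zmul d y z)" by (rule zmul_eqI) (simp_all add: algebra_simps)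
lemma zmul_add_right: "zmul d x (y + z) = zmul d x y + zmul d x z" by (rule zmul_eqI) (simp_all add: algebra_simps)
lemma zmul_diff_right: "zmul d x (y - z) = zmul d x y - zmul d x z" by (rule zmul_eqI) (simp_all add: algebra_simps)
lemma zmul_diff_left: "zmul d (y - z) x = zmul d y x - zmul d z x" by (rule zmul_eqI) (simp_all add: algebra_simps)
lemma zmul_minus_right: "zmul d x (- y) = - zmul d x y" by (rule zmul_eqI) (simp_all add: algebra_simps)
lemma zmul_one_right[simp]: "zmul d x (1, 0) = x" by (rule zmul_eqI) simp_all
lemma zmul_one_left[simp]: "zmul d (1, 0) x = x" by (rule zmul_eqI) simp_all
lemma zmul_zero_right[simp]: "zmul d x 0 = 0" by (rule zmul_eqI) simp_all
lemma zmul_zero_left[simp]: "zmul d 0 x = 0" by (rule zmul_eqI) simp_all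
lemma zmul_sum_right: "zmul d x (\<Sum>i\<in>A. f i) = (\<Sum>i\<in>A. zmul d x (f i))"
  by (rule zmul_eqI) (simp_all add: fst_sum snd_sum sum_distrib_left sum.distrib algebra_simps)

lemma zpow_add: "zpow d x (m + n) = zmul d (zpow d x m) (zpow d x n)"
  by (induction m) (simp_all add: zmul_assoc)
lemma zpow_zmul: "zpow d (zmul d x y) n = zmul d (zpow d x n) (zpow d y n)"
  by (induction n) (simp_all, metis zmul_assoc zmul_comm)
lemma zpow_mult: "zpow d x (m * n) = zpow d (zpow d x m) n"
  by (induction n) (simp_all add: zpow_add)

lemma zpow4: "zpow d x 4 = zmul d x (zmul d x (zmul d x x))"
  by (simp add: numeral_eq_Suc)

lemma pi_dvd_even: "pi_dvd (2*j) x \<longleftrightarrow> 2^j dvd fst x \<and> 2^j dvd snd x"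
  by (simp add: pi_dvd_def)
lemma pi_dvd_odd: "pi_dvd (Suc (2*j)) x \<longleftrightarrow> 2^(Suc j) dvd fst x \<and> 2^j dvd snd x"
  by (simp add: pi_dvd_def)

lemma pi_dvd_add: "pi_dvd m x \<Longrightarrow> pi_dvd m y \<Longrightarrow> pi_dvd m (x + y)"
  by (simp add: pi_dvd_def)
lemma pi_dvd_diff: "pi_dvd m x \<Longrightarrow> pi_dvd m y \<Longrightarrow> pi_dvd m (x - y)"
  by (simp add: pi_dvd_def)
lemma pi_dvd_uminus: "pi_dvd m (- x) \<longleftrightarrow> pi_dvd m x"
  by (simp add: pi_dvd_def)
lemma pi_dvd_zero[simp]: "pi_dvd m 0" by (simp add: pi_dvd_def)
lemma pi_dvd_0[simp]: "pi_dvd 0 x" by (simp add: pi_dvd_def)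
lemma pi_dvd_sum: "(\<And>i. i \<in> A \<Longrightarrow> pi_dvd m (f i)) \<Longrightarrow> pi_dvd m (\<Sum>i\<in>A. f i)"
  by (induction A rule: infinite_finite_induct) (auto intro: pi_dvd_add)
lemma pi_dvd_mono: "pi_dvd m x \<Longrightarrow> k \<le> m \<Longrightarrow> pi_dvd k x"
  unfolding pi_dvd_def by (meson power_le_dvd div_le_mono add_le_mono1)
lemma pi_dvd_diff_sym: "pi_dvd m (x - y) \<longleftrightarrow> pi_dvd m (y - x)"
  by (metis minus_diff_eq pi_dvd_uminus)
lemma pi_dvd_trans: "pi_dvd m (x - y) \<Longrightarrow> pi_dvd m (y - z) \<Longrightarrow> pi_dvd m (x - z)"
  using pi_dvd_add[of m "x - y" "y - z"] by simp

lemma pow2_dvd_mult: "(2::int)^a dvd x \<Longrightarrow> 2^b dvd y \<Longrightarrow> c \<le> a + b \<Longrightarrow> 2^c dvd x * y"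
  by (metis mult_dvd_mono power_add power_le_dvd)

lemma pi_dvd_mul: assumes "even d" "pi_dvd m x" "pi_dvd k y" shows "pi_dvd (m + k) (zmul d x y)"
proof -
  obtain e where e: "d = 2 * e" using assms(1) by blast
  have x1: "2^((m+1) div 2) dvd fst x" and x2: "2^(m div 2) dvd snd x"
    and y1: "2^((k+1) div 2) dvd fst y" and y2: "2^(k div 2) dvd snd y"
    using assms by (auto simp: pi_dvd_def)
  have a: "2^((m+k+1) div 2) dvd fst x * fst y"
    by (rule pow2_dvd_mult[OF x1 y1]) presburger
  have b0: "2^(Suc (m div 2 + k div 2)) dvd 2 * (snd x * snd y)"
    using pow2_dvd_mult[OF x2 y2, of "m div 2 + k div 2"] by (simp add: mult_dvd_mono)
  have b: "2^((m+k+1) div 2) dvd d * snd x * snd y"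
  proof -
    have "2^((m+k+1) div 2) dvd (2::int)^(Suc (m div 2 + k div 2))"
      by (rule le_imp_power_dvd) presburger
    then have "2^((m+k+1) div 2) dvd 2 * (snd x * snd y)" using b0 dvd_trans by blast
    then have "2^((m+k+1) div 2) dvd 2 * (snd x * snd y) * e" by (rule dvd_mult2)
    then show ?thesis unfolding e by (simp add: ac_simps)
  qed
  have c: "2^((m+k) div 2) dvd fst x * snd y"
    by (rule pow2_dvd_mult[OF x1 y2]) presburger
  have c2: "2^((m+k) div 2) dvd snd x * fst y"
    by (rule pow2_dvd_mult[OF x2 y1]) presburger
  show ?thesis using a b c c2 by (simp add: pi_dvd_def)
qed

lemma pi_dvd_mul_left: "even d \<Longrightarrow> pi_dvd m x \<Longrightarrow> pi_dvd m (zmul d x y)"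
  using pi_dvd_mul[of d m x 0 y] by simp
lemma pi_dvd_mul_right: "even d \<Longrightarrow> pi_dvd m y \<Longrightarrow> pi_dvd m (zmul d x y)"
  using pi_dvd_mul[of d 0 x m y] by simp

lemma pi_dvd_cong_mul: "even d \<Longrightarrow> pi_dvd m (x - x') \<Longrightarrow> pi_dvd m (y - y') \<Longrightarrow> pi_dvd m (zmul d x y - zmul d x' y')"
proof -
  assume d: "even d" and a: "pi_dvd m (x - x')" and b: "pi_dvd m (y - y')"
  have "zmul d x y - zmul d x' y' = zmul d (x - x') y + zmul d x' (y - y')"
    by (simp add: zmul_diff_left zmul_diff_right)
  then show ?thesis using pi_dvd_mul_left[OF d a] pi_dvd_mul_right[OF d b] pi_dvd_add by metis
qed

lemma pi_dvd_cong_zpow: "even d \<Longrightarrow> pi_dvd m (x - x') \<Longrightarrow> pi_dvd m (zpow d x k - zpow d x' k)"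
  by (induction k) (simp_all add: pi_dvd_cong_mul)

lemma pi_dvd_cong_sum: "(\<And>i. i \<in> A \<Longrightarrow> pi_dvd m (f i - g i)) \<Longrightarrow> pi_dvd m ((\<Sum>i\<in>A. f i) - (\<Sum>i\<in>A. g i))"
  by (simp add: sum_subtractf[symmetric] pi_dvd_sum)

lemma pi_exact_even: "pi_exact (2*j) x \<longleftrightarrow> (\<exists>a b. odd a \<and> x = (2^j * a, 2^j * b))"
proof
  assume "pi_exact (2*j) x"
  then have h: "2^j dvd fst x" "2^j dvd snd x" "\<not> 2^(Suc j) dvd fst x"
    by (auto simp: pi_exact_def pi_dvd_even pi_dvd_odd)
  obtain a where a: "fst x = 2^j * a" using h(1) by blast
  obtain b where b: "snd x = 2^j * b" using h(2) by blast
  have "odd a" using h(3) a by auto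
  then show "\<exists>a b. odd a \<and> x = (2^j * a, 2^j * b)" using a b by (metis prod.collapse)
next
  assume "\<exists>a b. odd a \<and> x = (2^j * a, 2^j * b)"
  then obtain a b where "odd a" "x = (2^j * a, 2^j * b)" by blast
  then show "pi_exact (2*j) x"
    by (auto simp: pi_exact_def pi_dvd_even pi_dvd_odd)
qed

lemma pi_exact_odd: "pi_exact (Suc (2*j)) x \<longleftrightarrow> (\<exists>a b. odd b \<and> x = (2^Suc j * a, 2^j * b))"
proof
  assume "pi_exact (Suc (2*j)) x"
  then have h: "2^Suc j dvd fst x" "2^j dvd snd x" "\<not> 2^(Suc j) dvd snd x"
    using pi_dvd_even[of "Suc j" x] by (auto simp: pi_exact_def pi_dvd_odd)
  obtain a where a: "fst x = 2^Suc j * a" using h(1) by blast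
  obtain b where b: "snd x = 2^j * b" using h(2) by blast
  have "odd b" using h(3) b by auto
  then show "\<exists>a b. odd b \<and> x = (2^Suc j * a, 2^j * b)" using a b by (metis prod.collapse)
next
  assume "\<exists>a b. odd b \<and> x = (2^Suc j * a, 2^j * b)"
  then obtain a b where "odd b" "x = (2^Suc j * a, 2^j * b)" by blast
  then show "pi_exact (Suc (2*j)) x"
    using pi_dvd_even[of "Suc j" x] by (auto simp: pi_exact_def pi_dvd_odd)
qed

lemma zunit_iff_pi_exact: "zunit x \<longleftrightarrow> pi_exact 0 x"
  using pi_exact_even[of 0 x] by (auto simp: zunit_def) (metis prod.collapse)

lemma nat_parity_cases: obtains j where "m = 2*j" | j where "m = Suc (2*j)"
  by (metis oddE evenE Suc_eq_plus1)

lemma d_mod4_half: "d mod 4 = (2::int) \<Longrightarrow> \<exists>e. d = 2 * e \<and> odd e"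
  by presburger

lemma pi_exact_mul_ee: assumes d: "even d" and x: "pi_exact (2*i) x" and y: "pi_exact (2*j) y"
  shows "pi_exact (2*(i+j)) (zmul d x y)"
proof -
  obtain a b where ab: "odd a" "x = (2^i*a, 2^i*b)" using x pi_exact_even by blast
  obtain a' b' where ab': "odd a'" "y = (2^j*a', 2^j*b')" using y pi_exact_even by blast
  have "zmul d x y = (2^(i+j) * (a*a' + d*b*b'), 2^(i+j)*(a*b' + b*a'))"
    by (simp add: ab ab' zmul_def power_add algebra_simps)
  moreover have "odd (a*a' + d*b*b')" using ab ab' d by simp
  ultimately show ?thesis using pi_exact_even by blast
qed

lemma pi_exact_mul_oe: assumes d: "d = 2 * e" and x: "pi_exact (Suc (2*i)) x" and y: "pi_exact (2*j) y"
  shows "pi_exact (Suc (2*(i+j))) (zmul d x y)"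
proof -
  obtain a b where ab: "odd b" "x = (2^Suc i*a, 2^i*b)" using x pi_exact_odd by blast
  obtain a' b' where ab': "odd a'" "y = (2^j*a', 2^j*b')" using y pi_exact_even by blast
  have "zmul d x y = (2^Suc (i+j) * (a*a' + e*b*b'), 2^(i+j)*(2*a*b' + b*a'))"
    by (simp add: ab ab' d zmul_def power_add algebra_simps)
  moreover have "odd (2*a*b' + b*a')" using ab ab' by simp
  ultimately show ?thesis using pi_exact_odd by blast
qed

lemma pi_exact_mul_oo: assumes d: "d = 2 * e" "odd e" and x: "pi_exact (Suc (2*i)) x" and y: "pi_exact (Suc (2*j)) y"
  shows "pi_exact (2*(Suc (i+j))) (zmul d x y)"
proof -
  obtain a b where ab: "odd b" "x = (2^Suc i*a, 2^i*b)" using x pi_exact_odd by blast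
  obtain a' b' where ab': "odd b'" "y = (2^Suc j*a', 2^j*b')" using y pi_exact_odd by blast
  have "zmul d x y = (2^Suc (i+j) * (2*a*a' + e*b*b'), 2^Suc(i+j)*(a*b' + b*a'))"
    by (simp add: ab ab' d zmul_def power_add algebra_simps)
  moreover have "odd (2*a*a' + e*b*b')" using ab ab' d by simp
  ultimately show ?thesis using pi_exact_even by blast
qed

lemma pi_exact_mul: assumes d: "d mod 4 = 2" and x: "pi_exact m x" and y: "pi_exact k y"
  shows "pi_exact (m + k) (zmul d x y)"
proof -
  obtain e where e: "d = 2 * e" "odd e" using d_mod4_half[OF d] by blast
  have de: "even d" using e by simp
  show ?thesis
  proof (cases m rule: nat_parity_cases)
    case (1 i) note mi = this
    show ?thesis
    proof (cases k rule: nat_parity_cases)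
      case (1 j) then show ?thesis using pi_exact_mul_ee[OF de, of i x j y] x y mi by (simp add: algebra_simps)
    next
      case (2 j) then show ?thesis using pi_exact_mul_oe[OF e(1), of j y i x] x y mi
        by (simp add: zmul_comm algebra_simps)
    qed
  next
    case (2 i) note mi = this
    show ?thesis
    proof (cases k rule: nat_parity_cases)
      case (1 j) then show ?thesis using pi_exact_mul_oe[OF e(1), of i x j y] x y mi by (simp add: algebra_simps)
    next
      case (2 j) then show ?thesis using pi_exact_mul_oo[OF e, of i x j y] x y mi
        by (simp add: algebra_simps)
    qed
  qed
qed

lemma pi_exact_zpow: "d mod 4 = 2 \<Longrightarrow> pi_exact m x \<Longrightarrow> pi_exact (m * k) (zpow d x k)"
proof (induction k)
  case 0 then show ?case by (simp add: pi_exact_def pi_dvd_def)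
next
  case (Suc k) then show ?case using pi_exact_mul[of d m x "m*k"] by simp
qed

lemma pi_exact_diff: assumes x: "pi_exact m x" and y: "pi_exact m y" shows "pi_dvd (Suc m) (x - y)"
proof (cases m rule: nat_parity_cases)
  case (1 j)
  obtain a b where ab: "odd a" "x = (2^j*a, 2^j*b)" using x pi_exact_even 1 by blast
  obtain a' b' where ab': "odd a'" "y = (2^j*a', 2^j*b')" using y pi_exact_even 1 by blast
  have "even (a - a')" using ab ab' by simp
  then obtain c where "a - a' = 2 * c" by blast
  then have "2^Suc j * c = 2^j*a - 2^j*a'" by (simp add: algebra_simps)
  then show ?thesis using 1 ab ab' pi_dvd_odd[of j] by (auto simp: right_diff_distrib[symmetric])
next
  case (2 j)
  obtain a b where ab: "odd b" "x = (2^Suc j*a, 2^j*b)" using x pi_exact_odd 2 by blast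
  obtain a' b' where ab': "odd b'" "y = (2^Suc j*a', 2^j*b')" using y pi_exact_odd 2 by blast
  have "even (b - b')" using ab ab' by simp
  then obtain c where "b - b' = 2 * c" by blast
  then have c: "2^Suc j * c = 2^j*b - 2^j*b'" by (simp add: algebra_simps)
  have "pi_dvd (2 * Suc j) (x - y)" unfolding pi_dvd_even using ab ab' c
    by (auto simp: right_diff_distrib[symmetric])
  then show ?thesis using 2 by simp
qed

lemma pi_exact_not_dvd: "pi_exact m x \<Longrightarrow> m < k \<Longrightarrow> \<not> pi_dvd k x"
  unfolding pi_exact_def using pi_dvd_mono by (metis Suc_leI)

lemma pi_exact_imp_dvd: "pi_exact m x \<Longrightarrow> pi_dvd m x" by (simp add: pi_exact_def)

lemma ex_not_pi_dvd: assumes "x \<noteq> 0" shows "\<exists>M. \<not> pi_dvd M x"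
proof -
  obtain c where c: "c \<noteq> 0" "c = fst x \<or> c = snd x" using assms by (metis prod_eq_iff fst_zero snd_zero)
  let ?n = "nat \<bar>c\<bar>"
  have "\<not> 2^?n dvd c"
  proof
    assume "2^?n dvd c"
    then have "\<bar>2^?n\<bar> \<le> \<bar>c\<bar>" using dvd_imp_le_int c(1) by blast
    moreover have "int ?n < 2^?n" using less_exp[of ?n] by (metis of_nat_less_iff of_nat_numeral of_nat_power)
    ultimately show False using c(1) by simp
  qed
  then have "\<not> pi_dvd (2 * ?n) x" using c by (auto simp: pi_dvd_even)
  then show ?thesis by blast
qed

lemma pi_exact_exists: assumes "x \<noteq> 0" shows "\<exists>m. pi_exact m x"
proof -
  obtain M where M: "\<not> pi_dvd M x" using ex_not_pi_dvd[OF assms] by blast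
  define m0 where "m0 = (LEAST m. \<not> pi_dvd m x)"
  have m0: "\<not> pi_dvd m0 x" unfolding m0_def by (rule LeastI[of _ M]) (rule M)
  have "m0 \<noteq> 0" using m0 by (metis pi_dvd_0)
  then obtain m' where m': "m0 = Suc m'" using not0_implies_Suc by blast
  have "pi_dvd m' x" using not_less_Least[of m' "\<lambda>m. \<not> pi_dvd m x"] m' m0_def by auto
  then show ?thesis using m0 m' pi_exact_def by blast
qed

lemma pi_dvd_cancel: assumes d: "d mod 4 = 2" and F: "pi_exact f F" and h: "pi_dvd (f + m) (zmul d F x)"
  shows "pi_dvd m x"
proof (rule ccontr)
  assume n: "\<not> pi_dvd m x"
  then have "x \<noteq> 0" by auto
  then obtain m' where m': "pi_exact m' x" using pi_exact_exists by blast
  have "m' < m" using m' n pi_dvd_mono pi_exact_imp_dvd by (metis not_less)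
  then have "pi_exact (f + m') (zmul d F x)" using pi_exact_mul[OF d F m'] by simp
  then show False using h pi_exact_not_dvd \<open>m' < m\<close> by (metis add_less_mono1 add.commute nat_add_left_cancel_less)
qed

lemma zmul_pow2: "zmul d (2^k, 0) x = (2^k * fst x, 2^k * snd x)"
  by (simp add: zmul_def)

lemma pi_dvd_pow2: "pi_dvd (2*k + m) ((2^k * fst x, 2^k * snd x)) \<longleftrightarrow> pi_dvd m x"
proof -
  have "(2::int)^((2*k + m + 1) div 2) = 2^k * 2^((m+1) div 2)"
    by (simp add: power_add[symmetric])
  moreover have "(2::int)^((2*k + m) div 2) = 2^k * 2^(m div 2)"
    by (simp add: power_add[symmetric])
  ultimately show ?thesis by (simp add: pi_dvd_def)
qed

lemma pi_exact_pow2: "pi_exact (2*k + m) ((2^k * fst x, 2^k * snd x)) \<longleftrightarrow> pi_exact m x"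
  using pi_dvd_pow2[of k m x] pi_dvd_pow2[of k "Suc m" x] by (simp add: pi_exact_def)

lemma pi_dvd_even_factor: assumes "pi_dvd (2*k) x" shows "\<exists>y. x = (2^k * fst y, 2^k * snd y)"
proof -
  obtain a where a: "fst x = 2^k * a" using assms by (auto simp: pi_dvd_even)
  obtain b where b: "snd x = 2^k * b" using assms by (auto simp: pi_dvd_even)
  show ?thesis using a b by (metis fst_conv snd_conv prod.collapse)
qed

definition exact_pow2 :: "nat \<Rightarrow> int \<Rightarrow> bool" where
  "exact_pow2 e P \<longleftrightarrow> 2^e dvd P \<and> \<not> 2^(Suc e) dvd P"

lemma pi_exact_pair: assumes "exact_pow2 e1 P" "exact_pow2 e2 Q" shows "pi_exact (min (2*e1) (Suc (2*e2))) (P, Q)"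
proof (cases "e1 \<le> e2")
  case True
  then have m: "min (2*e1) (Suc (2*e2)) = 2*e1" by simp
  have "2^e1 dvd Q" using assms(2) True unfolding exact_pow2_def using power_le_dvd by blast
  then show ?thesis unfolding m pi_exact_def pi_dvd_odd pi_dvd_even using assms(1) by (simp add: exact_pow2_def)
next
  case False
  then have m: "min (2*e1) (Suc (2*e2)) = Suc (2*e2)" by simp
  have "2^Suc e2 dvd P" using assms(1) False unfolding exact_pow2_def using power_le_dvd
    by (metis not_le Suc_leI)
  moreover have "Suc (Suc (2 * e2)) = 2 * Suc e2" by simp
  ultimately show ?thesis unfolding m pi_exact_def pi_dvd_odd using assms(2) pi_dvd_even[of "Suc e2" "(P,Q)"]
    by (simp add: exact_pow2_def)
qed

lemma pi_exact_sqrt_part: assumes "exact_pow2 e2 Q" shows "pi_exact (Suc (2*e2)) (0, Q)"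
proof -
  have "Suc (Suc (2 * e2)) = 2 * Suc e2" by simp
  then show ?thesis unfolding pi_exact_def pi_dvd_odd using assms pi_dvd_even[of "Suc e2" "(0,Q)"]
    by (simp add: exact_pow2_def)
qed

lemma pi_exact_rational_part: assumes "exact_pow2 e1 P" shows "pi_exact (2*e1) (P, 0)"
  unfolding pi_exact_def pi_dvd_odd pi_dvd_even using assms by (simp add: exact_pow2_def)

section \<open>Hensel lifting for fourth powers\<close>

definition quartic_tail :: "int \<Rightarrow> zsqrt \<Rightarrow> zsqrt \<Rightarrow> zsqrt" where
  "quartic_tail d y \<delta> = zmul d (6, 0) (zmul d y y) + zmul d (4, 0) (zmul d y \<delta>) + zmul d \<delta> \<delta>"

lemma zpow4_add_expand: "zpow d (y + \<delta>) 4 = zpow d y 4 + zmul d (4, 0) (zmul d (zpow d y 3) \<delta>) + zmul d (zmul d \<delta> \<delta>) (quartic_tail d y \<delta>)"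
proof -
  obtain a b where y: "y = (a,b)" by (cases y)
  obtain p q where \<delta>: "\<delta> = (p,q)" by (cases \<delta>)
  show ?thesis unfolding y \<delta> by (simp add: zpow4 numeral_eq_Suc quartic_tail_def zmul_def) algebra
qed

lemma pi_exact_four: "pi_exact 4 (4, 0)"
  using pi_exact_even[of 2 "(4,0)"] by auto

lemma pi_exact_zpow_unit: "d mod 4 = 2 \<Longrightarrow> zunit y \<Longrightarrow> pi_exact 0 (zpow d y k)"
  using pi_exact_zpow[of d 0 y k] zunit_iff_pi_exact by simp

lemma pi_dvd_quartic_tail: assumes d: "even d" and "pi_dvd 1 \<delta>" shows "pi_dvd 2 (quartic_tail d y \<delta>)"
proof -
  have "pi_dvd 2 (6::int, 0::int)" by (simp add: pi_dvd_def)
  then have a: "pi_dvd 2 (zmul d (6, 0) (zmul d y y))" using pi_dvd_mul_left d by blast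
  have "pi_dvd 4 (4::int, 0::int)" by (simp add: pi_dvd_def)
  then have "pi_dvd 4 (zmul d (4, 0) (zmul d y \<delta>))" using pi_dvd_mul_left[OF d] by blast
  then have b: "pi_dvd 2 (zmul d (4, 0) (zmul d y \<delta>))" using pi_dvd_mono by fastforce
  have c: "pi_dvd 2 (zmul d \<delta> \<delta>)" using pi_dvd_mul[OF d assms(2) assms(2)] by (simp add: numeral_2_eq_2)
  show ?thesis unfolding quartic_tail_def using a b c pi_dvd_add by blast
qed

lemma pi_dvd_quadratic_terms: assumes d: "even d" and B: "pi_dvd c B" and \<delta>: "pi_dvd k \<delta>" and k: "1 \<le> k"
  shows "pi_dvd (c + 2*k + 2) (zmul d B (zmul d (zmul d \<delta> \<delta>) (quartic_tail d y \<delta>)))"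
proof -
  have "pi_dvd 1 \<delta>" using \<delta> k pi_dvd_mono by blast
  then have "pi_dvd 2 (quartic_tail d y \<delta>)" using pi_dvd_quartic_tail d by blast
  moreover have "pi_dvd (2*k) (zmul d \<delta> \<delta>)" using pi_dvd_mul[OF d \<delta> \<delta>] by (simp add: mult_2)
  ultimately have "pi_dvd (2*k + 2) (zmul d (zmul d \<delta> \<delta>) (quartic_tail d y \<delta>))" using pi_dvd_mul[OF d] by blast
  then show ?thesis using pi_dvd_mul[OF d B, of "2*k+2"] by (simp add: add.assoc)
qed

lemma pi_exact_linear_term: assumes d: "d mod 4 = 2" and B: "pi_exact c B" and y: "zunit y" and \<delta>: "pi_exact k \<delta>"
  shows "pi_exact (c + k + 4) (zmul d B (zmul d (4, 0) (zmul d (zpow d y 3) \<delta>)))"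
proof -
  have "pi_exact (0 + k) (zmul d (zpow d y 3) \<delta>)" using pi_exact_mul[OF d pi_exact_zpow_unit[OF d y] \<delta>] .
  then have "pi_exact (4 + k) (zmul d (4, 0) (zmul d (zpow d y 3) \<delta>))" using pi_exact_mul[OF d pi_exact_four] by simp
  then show ?thesis using pi_exact_mul[OF d B, of "4+k"] by (simp add: ac_simps)
qed

lemma pi_exact_pi_pow: "d mod 4 = 2 \<Longrightarrow> pi_exact k (zpow d (0, 1) k)"
  using pi_exact_zpow[of d 1 "(0,1)" k] pi_exact_odd[of 0 "(0,1)"] by auto

text \<open>If the error has exact valuation c + k + 4, then so does the change caused by the
  correction \<delta> = \<pi>^k (as 4 = \<pi>^4 \<cdot> unit and y is a unit); two elements of equal exact
  valuation are congruent modulo the next power of \<pi>, the residue field having two elements.\<close>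

lemma hensel_step: assumes d: "d mod 4 = 2" and B: "pi_exact c B" and y: "zunit y" and k: "3 \<le> k"
  and h: "pi_dvd (c + k + 4) (zmul d B (zpow d y 4) - T)"
  shows "\<exists>y'. pi_dvd k (y' - y) \<and> pi_dvd (c + k + 5) (zmul d B (zpow d y' 4) - T)"
proof (cases "pi_dvd (c + k + 5) (zmul d B (zpow d y 4) - T)")
  case True then show ?thesis by (intro exI[of _ y]) simp
next
  case False
  define \<delta> where "\<delta> = zpow d (0, 1) k"
  have de: "even d" using d by presburger
  have \<delta>: "pi_exact k \<delta>" unfolding \<delta>_def using pi_exact_pi_pow[OF d] .
  define E where "E = zmul d B (zpow d y 4) - T"
  define Z where "Z = zmul d B (zmul d (4, 0) (zmul d (zpow d y 3) \<delta>))"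
  define W where "W = zmul d B (zmul d (zmul d \<delta> \<delta>) (quartic_tail d y \<delta>))"
  have s5: "Suc (c + k + 4) = c + k + 5" by simp
  have E: "pi_exact (c + k + 4) E" using h False unfolding E_def pi_exact_def s5 by blast
  have Z: "pi_exact (c + k + 4) (- Z)" using pi_exact_linear_term[OF d B y \<delta>] unfolding Z_def pi_exact_def pi_dvd_uminus .
  have EZ: "pi_dvd (c + k + 5) (E + Z)" using pi_exact_diff[OF E Z] unfolding s5 by simp
  have W: "pi_dvd (c + k + 5) W" unfolding W_def
    using pi_dvd_quadratic_terms[OF de pi_exact_imp_dvd[OF B] pi_exact_imp_dvd[OF \<delta>], of y] k pi_dvd_mono by fastforce
  have "zmul d B (zpow d (y + \<delta>) 4) - T = (E + Z) + W"
    unfolding zpow4_add_expand E_def Z_def W_def zmul_add_right by simp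
  then have "pi_dvd (c + k + 5) (zmul d B (zpow d (y + \<delta>) 4) - T)" using EZ W pi_dvd_add by simp
  moreover have "pi_dvd k ((y + \<delta>) - y)" using \<delta> pi_exact_imp_dvd by simp
  ultimately show ?thesis by blast
qed

lemma hensel_unique_step: assumes d: "d mod 4 = 2" and B: "pi_exact c B" and y: "zunit y" and m: "3 \<le> m"
  and zy: "pi_dvd m (z - y)" and h: "pi_dvd (c + m + 5) (zmul d B (zpow d z 4) - zmul d B (zpow d y 4))"
  shows "pi_dvd (Suc m) (z - y)"
proof (rule ccontr)
  assume n: "\<not> pi_dvd (Suc m) (z - y)"
  define \<delta> where "\<delta> = z - y"
  have de: "even d" using d by presburger
  have \<delta>: "pi_exact m \<delta>" using zy n unfolding \<delta>_def pi_exact_def by simp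
  define Z where "Z = zmul d B (zmul d (4, 0) (zmul d (zpow d y 3) \<delta>))"
  define W where "W = zmul d B (zmul d (zmul d \<delta> \<delta>) (quartic_tail d y \<delta>))"
  have Z: "pi_exact (c + m + 4) Z" using pi_exact_linear_term[OF d B y \<delta>] unfolding Z_def .
  have W: "pi_dvd (c + m + 5) W" unfolding W_def
    using pi_dvd_quadratic_terms[OF de pi_exact_imp_dvd[OF B] pi_exact_imp_dvd[OF \<delta>], of y] m pi_dvd_mono by fastforce
  have z: "z = y + \<delta>" unfolding \<delta>_def by simp
  have "zmul d B (zpow d z 4) - zmul d B (zpow d y 4) = Z + W"
    unfolding z zpow4_add_expand Z_def W_def zmul_add_right by simp
  then have "pi_dvd (c + m + 5) Z" using h W pi_dvd_diff[of _ "Z + W" W] by simp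
  moreover have "c + m + 4 < c + m + 5" by simp
  ultimately show False using Z pi_exact_not_dvd by blast
qed

lemma zunit_cong: "pi_dvd 5 (y - y0) \<Longrightarrow> zunit y0 \<Longrightarrow> zunit y"
proof -
  assume a: "pi_dvd 5 (y - y0)" "zunit y0"
  have "(2::int) ^ 3 dvd fst y - fst y0" using a(1) by (simp add: pi_dvd_def)
  then have "2 dvd fst y - fst y0" by (metis dvd_trans dvd_triv_left power3_eq_cube mult.assoc)
  then show "zunit y" using a(2) unfolding zunit_def by presburger
qed

lemma hensel_exists: assumes d: "d mod 4 = 2" and B: "pi_exact c B" and y0: "zunit y0"
  and h: "pi_dvd (c + 9) (zmul d B (zpow d y0 4) - T)" and k: "5 \<le> k"
  shows "\<exists>y. pi_dvd 5 (y - y0) \<and> pi_dvd (c + k + 4) (zmul d B (zpow d y 4) - T)"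
  using k
proof (induction k rule: nat_induct_at_least)
  case base then show ?case using h by (intro exI[of _ y0]) (simp add: add.assoc)
next
  case (Suc k)
  then obtain y where y: "pi_dvd 5 (y - y0)" "pi_dvd (c + k + 4) (zmul d B (zpow d y 4) - T)" by blast
  have "zunit y" using zunit_cong y(1) y0 by blast
  then obtain y' where y': "pi_dvd k (y' - y)" "pi_dvd (c + k + 5) (zmul d B (zpow d y' 4) - T)"
    using hensel_step[OF d B _ _ y(2)] Suc.hyps by fastforce
  have "pi_dvd 5 (y' - y)" using y'(1) Suc.hyps pi_dvd_mono by blast
  then have "pi_dvd 5 (y' - y0)" using y(1) pi_dvd_trans by blast
  moreover have "c + Suc k + 4 = c + k + 5" by simp
  ultimately show ?case using y'(2) by metis
qed

lemma hensel_unique: assumes d: "d mod 4 = 2" and B: "pi_exact c B" and y0: "zunit y0"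
  and y: "pi_dvd 5 (y - y0)" and z: "pi_dvd 5 (z - y0)" and M: "5 \<le> M"
  and h: "pi_dvd (c + M + 4) (zmul d B (zpow d z 4) - zmul d B (zpow d y 4))"
  shows "pi_dvd M (z - y)"
proof -
  have yu: "zunit y" using zunit_cong y y0 by blast
  have "m \<le> M \<Longrightarrow> pi_dvd m (z - y)" if "5 \<le> m" for m
    using that
  proof (induction m rule: nat_induct_at_least)
    case base then show ?case using y z pi_dvd_trans pi_dvd_diff_sym by blast
  next
    case (Suc m)
    have "pi_dvd m (z - y)" using Suc by simp
    moreover have "pi_dvd (c + m + 5) (zmul d B (zpow d z 4) - zmul d B (zpow d y 4))"
      using h pi_dvd_mono Suc.prems by fastforce
    ultimately show ?case using hensel_unique_step[OF d B yu] Suc.hyps by simp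
  qed
  then show ?thesis using M by simp
qed

section \<open>Coherent sequences of approximations\<close>

text \<open>A coherent sequence S determines a 2-adic element of \<int>_2[\<surd>d], S n being its
  approximation modulo \<pi>^(2n) = 2^n \<cdot> unit.\<close>

definition coherent :: "(nat \<Rightarrow> zsqrt) \<Rightarrow> bool" where
  "coherent S \<longleftrightarrow> (\<forall>n. pi_dvd (2*n) (S (Suc n) - S n))"

definition ztrunc :: "nat \<Rightarrow> zsqrt \<Rightarrow> zsqrt" where
  "ztrunc n x = (fst x mod 2^n, snd x mod 2^n)"

lemma coherent_le: assumes "coherent S" "n \<le> m" shows "pi_dvd (2*n) (S m - S n)"
  using assms(2)
proof (induction m rule: dec_induct)
  case base then show ?case by simp
next
  case (step m)
  have "pi_dvd (2*m) (S (Suc m) - S m)" using assms(1) coherent_def by blast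
  then have "pi_dvd (2*n) (S (Suc m) - S m)" using pi_dvd_mono step by simp
  then show ?case using step pi_dvd_add[of "2*n" "S (Suc m) - S m" "S m - S n"] by simp
qed

lemma ztrunc_cong: "pi_dvd (2*n) (ztrunc n x - x)"
  unfolding pi_dvd_even ztrunc_def by (simp add: mod_eq_dvd_iff[symmetric])

lemma ztrunc_eq: "pi_dvd (2*n) (x - y) \<Longrightarrow> ztrunc n x = ztrunc n y"
  unfolding pi_dvd_even ztrunc_def by (simp add: mod_eq_dvd_iff)

lemma ztrunc_ztrunc: "n \<le> m \<Longrightarrow> ztrunc n (ztrunc m x) = ztrunc n x"
  unfolding ztrunc_def by (simp add: mod_mod_cancel le_imp_power_dvd)

lemma ztrunc_range: "0 \<le> fst (ztrunc n x) \<and> fst (ztrunc n x) < 2^n \<and> 0 \<le> snd (ztrunc n x) \<and> snd (ztrunc n x) < 2^n"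
  unfolding ztrunc_def by simp

lemma coherent_ztrunc: assumes "coherent S" shows "coherent (\<lambda>n. ztrunc n (S n))"
  unfolding coherent_def
proof
  fix n
  have a: "pi_dvd (2*n) (ztrunc (Suc n) (S (Suc n)) - S (Suc n))" using ztrunc_cong[of "Suc n"] pi_dvd_mono[of "2 * Suc n" _ "2*n"] by simp
  have b: "pi_dvd (2*n) (S (Suc n) - S n)" using assms coherent_def by blast
  have c: "pi_dvd (2*n) (S n - ztrunc n (S n))" using ztrunc_cong pi_dvd_diff_sym by blast
  show "pi_dvd (2*n) (ztrunc (Suc n) (S (Suc n)) - ztrunc n (S n))" using pi_dvd_trans[OF pi_dvd_trans[OF a b] c] .
qed

lemma coherent_const: "coherent (\<lambda>n. x)" by (simp add: coherent_def)

lemma coherent_zmul: "even d \<Longrightarrow> coherent S \<Longrightarrow> coherent U \<Longrightarrow> coherent (\<lambda>n. zmul d (S n) (U n))"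
  unfolding coherent_def by (simp add: pi_dvd_cong_mul)

lemma coherent_uminus: "coherent S \<Longrightarrow> coherent (\<lambda>n. - S n)"
proof -
  assume "coherent S"
  show ?thesis unfolding coherent_def
  proof
    fix n
    have "- S (Suc n) - - S n = - (S (Suc n) - S n)" by simp
    then show "pi_dvd (2*n) (- S (Suc n) - - S n)" using \<open>coherent S\<close> pi_dvd_uminus unfolding coherent_def by metis
  qed
qed

lemma coherent_sum: "(\<And>i. i \<in> A \<Longrightarrow> coherent (S i)) \<Longrightarrow> coherent (\<lambda>n. \<Sum>i\<in>A. S i n)"
  unfolding coherent_def by (simp add: pi_dvd_cong_sum)

lemma coherent_choice:
  assumes ex: "\<And>n. \<exists>y. P n y" and down: "\<And>n y. P (Suc n) y \<Longrightarrow> P n y"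
    and uniq: "\<And>n y z. P n y \<Longrightarrow> P n z \<Longrightarrow> pi_dvd (2*n) (z - y)"
  obtains Y where "coherent Y" "\<And>n. ztrunc n (Y n) = Y n" "\<And>n. \<exists>y. P n y \<and> pi_dvd (2*n) (Y n - y)"
proof
  define Ys where "Ys n = (SOME y. P n y)" for n
  have PYs: "P n (Ys n)" for n unfolding Ys_def using ex someI_ex by metis
  define Y where "Y n = ztrunc n (Ys n)" for n
  have YY: "pi_dvd (2*n) (Y n - Ys n)" for n unfolding Y_def using ztrunc_cong .
  show "coherent Y" unfolding coherent_def
  proof
    fix n
    have a: "pi_dvd (2*n) (Y (Suc n) - Ys (Suc n))" using YY[of "Suc n"] pi_dvd_mono by fastforce
    have b: "pi_dvd (2*n) (Ys (Suc n) - Ys n)" using uniq[OF PYs down[OF PYs]] .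
    have c: "pi_dvd (2*n) (Ys n - Y n)" using YY pi_dvd_diff_sym by blast
    show "pi_dvd (2*n) (Y (Suc n) - Y n)" using pi_dvd_trans[OF pi_dvd_trans[OF a b] c] .
  qed
  show "ztrunc n (Y n) = Y n" for n unfolding Y_def by (simp add: ztrunc_ztrunc)
  show "\<exists>y. P n y \<and> pi_dvd (2*n) (Y n - y)" for n using PYs YY by blast
qed

theorem hensel_coherent:
  assumes d: "d mod 4 = 2" and cB: "coherent B" and cT: "coherent T"
    and Bex: "\<And>n. n0 \<le> n \<Longrightarrow> pi_exact c (B n)" and y0: "zunit y0"
    and h0: "\<And>n. n1 \<le> n \<Longrightarrow> pi_dvd (c + 9) (zmul d (B n) (zpow d y0 4) - T n)"
  obtains Y where "coherent Y" "\<And>n. ztrunc n (Y n) = Y n" "\<And>n. 1 \<le> n \<Longrightarrow> zunit (Y n)"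
    "\<And>n. pi_dvd (2*n) (zmul d (B n) (zpow d (Y n) 4) - T n)"
proof -
  have de: "even d" using d by presburger
  define L where "L = n0 + n1 + c + 10"
  \<comment> \<open>Stage n is solved modulo \<pi>^(2(n+L)), so that the Hensel lift is unique modulo \<pi>^(2n).\<close>
  define P where "P n y \<longleftrightarrow> pi_dvd 5 (y - y0) \<and>
    pi_dvd (2*(n+L)) (zmul d (B (n+L)) (zpow d y 4) - T (n+L))" for n y
  have B': "pi_exact c (B (n+L))" for n using Bex L_def by simp
  have ex: "\<exists>y. P n y" for n
  proof -
    have h': "pi_dvd (c + 9) (zmul d (B (n+L)) (zpow d y0 4) - T (n+L))" using h0 L_def by simp
    obtain y where "pi_dvd 5 (y - y0)" "pi_dvd (c + 2*(n+L) + 4) (zmul d (B (n+L)) (zpow d y 4) - T (n+L))"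
      using hensel_exists[OF d B' y0 h', of "2*(n+L)"] L_def by auto
    then show ?thesis unfolding P_def using pi_dvd_mono le_add2 by (metis add.commute add.left_commute)
  qed
  have uniq: "pi_dvd (2*n) (z - y)" if "P n y" "P n z" for n y z
  proof -
    have "pi_dvd (2*(n+L)) (zmul d (B (n+L)) (zpow d z 4) - zmul d (B (n+L)) (zpow d y 4))"
      using pi_dvd_diff[of "2*(n+L)"] that unfolding P_def by fastforce
    moreover define M where "M = 2*(n+L) - c - 4"
    moreover have "c + M + 4 = 2*(n+L)" "5 \<le> M" "2*n \<le> M" unfolding M_def L_def by auto
    ultimately have "pi_dvd M (z - y)" using hensel_unique[OF d B' y0, of y z M] that unfolding P_def by simp
    then show ?thesis using \<open>2*n \<le> M\<close> pi_dvd_mono by blast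
  qed
  have down: "P n z" if "P (Suc n) z" for n z
  proof -
    have a: "pi_dvd (2*(n+L)) (zmul d (B (Suc n+L)) (zpow d z 4) - T (Suc n+L))"
      using that unfolding P_def using pi_dvd_mono by fastforce
    have b: "pi_dvd (2*(n+L)) (zmul d (B (n+L)) (zpow d z 4) - zmul d (B (Suc n+L)) (zpow d z 4))"
      using pi_dvd_cong_mul[OF de coherent_le[OF cB, of "n+L" "Suc n + L"], of "zpow d z 4" "zpow d z 4"]
        pi_dvd_diff_sym by simp
    have c: "pi_dvd (2*(n+L)) (T (Suc n + L) - T (n+L))" using coherent_le[OF cT, of "n+L" "Suc n + L"] by simp
    show ?thesis using that pi_dvd_trans[OF pi_dvd_trans[OF b a] c] unfolding P_def by simp
  qed
  obtain Y where cY: "coherent Y" and rY: "\<And>n. ztrunc n (Y n) = Y n"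
    and YP: "\<And>n. \<exists>y. P n y \<and> pi_dvd (2*n) (Y n - y)"
    using coherent_choice[of P, OF ex down uniq] by blast
  have "zunit (Y n)" if "1 \<le> n" for n
  proof -
    obtain y where y: "P n y" "pi_dvd (2*n) (Y n - y)" using YP by blast
    have "zunit y" using y(1) zunit_cong y0 unfolding P_def by blast
    moreover have "pi_dvd 2 (Y n - y)" using y(2) that pi_dvd_mono by fastforce
    ultimately show ?thesis unfolding zunit_def pi_dvd_def by simp
  qed
  moreover have "pi_dvd (2*n) (zmul d (B n) (zpow d (Y n) 4) - T n)" for n
  proof -
    obtain y where y: "P n y" "pi_dvd (2*n) (Y n - y)" using YP by blast
    have "pi_dvd (2*n) (B n - B (n+L))" using coherent_le[OF cB, of n "n+L"] pi_dvd_diff_sym by auto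
    then have a: "pi_dvd (2*n) (zmul d (B n) (zpow d (Y n) 4) - zmul d (B (n+L)) (zpow d y 4))"
      using pi_dvd_cong_mul[OF de _ pi_dvd_cong_zpow[OF de y(2)]] by blast
    have b: "pi_dvd (2*n) (zmul d (B (n+L)) (zpow d y 4) - T (n+L))"
      using y(1) unfolding P_def using pi_dvd_mono by fastforce
    have c: "pi_dvd (2*n) (T (n+L) - T n)" using coherent_le[OF cT, of n "n+L"] by simp
    show ?thesis using pi_dvd_trans[OF pi_dvd_trans[OF a b] c] .
  qed
  ultimately show ?thesis using that cY rY by blast
qed

section \<open>Integer approximations of elements of K\<close>

lemma Z2_iff: "x \<in> Z2 \<longleftrightarrow> (\<forall>n. 0 \<le> x n \<and> x n < 2^n \<and> x (Suc n) mod 2^n = x n)"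
  by (simp add: Z2_def)

lemma Z2_mod: assumes "x \<in> Z2" "n \<le> m" shows "x m mod 2^n = x n"
  using assms(2)
proof (induction m rule: dec_induct)
  case base then show ?case using assms(1) by (simp add: Z2_iff)
next
  case (step m)
  have "x (Suc m) mod 2^n = (x (Suc m) mod 2^m) mod 2^n"
    using step(1) by (simp add: mod_mod_cancel le_imp_power_dvd)
  also have "\<dots> = x m mod 2^n" using assms(1) by (simp add: Z2_iff)
  finally show ?case using step by simp
qed

lemma Z2_0: "x \<in> Z2 \<Longrightarrow> x 0 = 0"
  by (simp add: Z2_iff) (metis less_one power_0 order.antisym not_less zero_less_one int_one_le_iff_zero_less)

lemma z2_zero_eq: "z2_zero = (\<lambda>n. 0)"
  by (simp add: z2_zero_def z2_of_int_def)

lemma z2_of_int_Z2: "z2_of_int c \<in> Z2"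
  by (simp add: Z2_iff z2_of_int_def mod_mod_cancel)

lemma z2_zero_Z2: "z2_zero \<in> Z2"
  by (simp add: z2_zero_def z2_of_int_Z2)

lemma z2_add_Z2: assumes "x \<in> Z2" "y \<in> Z2" shows "z2_add x y \<in> Z2"
proof -
  have "((x (Suc n) + y (Suc n)) mod 2 ^ Suc n) mod 2^n = (x n + y n) mod 2^n" for n
  proof -
    have "((x (Suc n) + y (Suc n)) mod 2 ^ Suc n) mod 2^n = (x (Suc n) + y (Suc n)) mod 2^n"
      by (simp add: mod_mod_cancel)
    also have "\<dots> = (x (Suc n) mod 2^n + y (Suc n) mod 2^n) mod 2^n" by (simp add: mod_add_eq)
    finally show ?thesis using assms by (simp add: Z2_iff)
  qed
  then show ?thesis by (simp add: Z2_iff z2_add_def)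
qed

lemma z2_mul_Z2: assumes "x \<in> Z2" "y \<in> Z2" shows "z2_mul x y \<in> Z2"
proof -
  have "((x (Suc n) * y (Suc n)) mod 2 ^ Suc n) mod 2^n = (x n * y n) mod 2^n" for n
  proof -
    have "((x (Suc n) * y (Suc n)) mod 2 ^ Suc n) mod 2^n = (x (Suc n) * y (Suc n)) mod 2^n"
      by (simp add: mod_mod_cancel)
    also have "\<dots> = (x (Suc n) mod 2^n * (y (Suc n) mod 2^n)) mod 2^n" by (simp add: mod_mult_eq)
    finally show ?thesis using assms by (simp add: Z2_iff)
  qed
  then show ?thesis by (simp add: Z2_iff z2_mul_def)
qed

lemma dvd_mod_diff: "(m::int) dvd (x mod m - x)"
  by (metis mod_eq_dvd_iff mod_mod_trivial)

lemma Z2_below_val: assumes "z \<in> Z2" "z \<noteq> z2_zero"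
  shows "\<forall>m \<le> z2_val z. z m = 0" "z (Suc (z2_val z)) = 2 ^ z2_val z"
proof -
  obtain n where n: "z n \<noteq> 0" using assms(2) unfolding z2_zero_eq by auto
  then have "n \<noteq> 0" using Z2_0[OF assms(1)] by (metis)
  then obtain n' where n': "n = Suc n'" using not0_implies_Suc by blast
  let ?v = "z2_val z"
  have ex: "z (Suc ?v) \<noteq> 0" unfolding z2_val_def by (rule LeastI[of _ n']) (use n n' in simp)
  show A: "\<forall>m \<le> ?v. z m = 0"
  proof (intro allI impI)
    fix m assume m: "m \<le> ?v"
    show "z m = 0"
    proof (cases m)
      case 0 then show ?thesis using Z2_0[OF assms(1)] by simp
    next
      case (Suc m')
      then have "m' < ?v" using m by simp
      then show ?thesis using not_less_Least[of m' "\<lambda>n. z (Suc n) \<noteq> 0"] Suc unfolding z2_val_def by auto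
    qed
  qed
  have r: "0 \<le> z (Suc ?v)" "z (Suc ?v) < 2 ^ Suc ?v" using assms(1) unfolding Z2_iff by blast+
  have "z (Suc ?v) mod 2 ^ ?v = z ?v" using assms(1) by (simp add: Z2_iff)
  then have m0: "z (Suc ?v) mod 2 ^ ?v = 0" using A by simp
  then obtain q where q: "z (Suc ?v) = 2 ^ ?v * q" by (metis dvd_def mod_0_imp_dvd)
  have "q \<noteq> 0" using q ex by auto
  moreover have "0 \<le> q" using q r(1) by (simp add: zero_le_mult_iff)
  ultimately have "q > 0" by simp
  moreover have "q < 2" using q r(2) by (simp add: power_Suc mult.commute[of 2])
  ultimately have "q = 1" by simp
  then show "z (Suc ?v) = 2 ^ ?v" using q by simp
qed

lemma Z2_mod_val: assumes "z \<in> Z2" "z \<noteq> z2_zero" "Suc (z2_val z) \<le> n"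
  shows "z n mod 2 ^ Suc (z2_val z) = 2 ^ z2_val z"
  using Z2_mod[OF assms(1) assms(3)] Z2_below_val[OF assms(1,2)] by simp

text \<open>For p = z / 2^k with k \<le> N, q2_approx N p n = 2^(N - k) (z mod 2^n) approximates the
  2-adic integer 2^N p modulo 2^n.\<close>

definition q2_approx :: "nat \<Rightarrow> q2 \<Rightarrow> nat \<Rightarrow> int" where
  "q2_approx N p n = 2 ^ (N - fst p) * snd p n"

lemma Q2_iff: "(k, z) \<in> Q2 \<longleftrightarrow> z \<in> Z2 \<and> (k = 0 \<or> odd (z 1))"
  by (simp add: Q2_def)

lemma z2_shift_Z2: assumes z: "z \<in> Z2" and j: "z j = 0"
  shows "z2_shift j z \<in> Z2" "\<And>n. 2^j * z2_shift j z n = z (n + j)"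
proof -
  have dv: "2^j dvd z (n + j)" for n
  proof -
    have "z (n + j) mod 2^j = z j" using Z2_mod[OF z, of j "n+j"] by simp
    then show ?thesis using j by (simp add: mod_0_imp_dvd)
  qed
  show eq: "2^j * z2_shift j z n = z (n + j)" for n
    using dv[of n] by (simp add: z2_shift_def)
  show "z2_shift j z \<in> Z2" unfolding Z2_iff
  proof (intro allI conjI)
    fix n
    show "0 \<le> z2_shift j z n" using z unfolding Z2_iff z2_shift_def by (simp add: pos_imp_zdiv_nonneg_iff)
    have "z (n + j) < 2^n * 2^j" using z by (simp add: Z2_iff power_add[symmetric])
    then have "2^j * z2_shift j z n < 2^j * 2^n" using eq[of n] by (simp add: mult.commute)
    then show "z2_shift j z n < 2 ^ n" by simp
    have "z (Suc n + j) mod 2^(n + j) = z (n + j)" using Z2_mod[OF z, of "n+j" "Suc n + j"] by simp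
    then have "(2^j * z2_shift j z (Suc n)) mod (2^j * 2^n) = 2^j * z2_shift j z n"
      using eq[of n] eq[of "Suc n"] by (simp add: power_add mult.commute)
    then have "2^j * (z2_shift j z (Suc n) mod 2^n) = 2^j * z2_shift j z n"
      by (simp add: mod_mult_mult1)
    then show "z2_shift j z (Suc n) mod 2 ^ n = z2_shift j z n" by simp
  qed
qed

lemma q2_norm_approx: assumes z: "z \<in> Z2" and kN: "k \<le> N"
  shows "q2_norm k z \<in> Q2" "fst (q2_norm k z) \<le> k"
    "\<And>n. 2^n dvd (q2_approx N (q2_norm k z) n - 2^(N - k) * z n)"
proof -
  have all: "q2_norm k z \<in> Q2 \<and> fst (q2_norm k z) \<le> k \<and> (\<forall>n. 2^n dvd (q2_approx N (q2_norm k z) n - 2^(N - k) * z n))"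
  proof (cases "z = z2_zero")
    case True
    then show ?thesis using z2_zero_Z2 by (simp add: q2_norm_def Q2_iff q2_approx_def z2_zero_eq)
  next
    case False
    let ?v = "z2_val z"
    define j where "j = min k ?v"
    have zj: "z j = 0" using Z2_below_val(1)[OF z False] j_def by simp
    have nrm: "q2_norm k z = (k - j, z2_shift j z)" using False by (simp add: q2_norm_def j_def Let_def)
    note sh = z2_shift_Z2[OF z zj]
    have odd: "k - j = 0 \<or> odd (z2_shift j z 1)"
    proof (cases "k - j = 0")
      case False
      then have "j = ?v" using j_def by simp
      then have "2^j * z2_shift j z 1 = 2^j" using sh(2)[of 1] Z2_below_val(2)[OF z] \<open>z \<noteq> z2_zero\<close> by simp
      then show ?thesis by simp
    qed simp
    have q: "2^n dvd (q2_approx N (q2_norm k z) n - 2^(N - k) * z n)" for n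
    proof -
      have "q2_approx N (q2_norm k z) n = 2^(N - k) * (2^j * z2_shift j z n)"
        using kN j_def by (simp add: nrm q2_approx_def power_add[symmetric])
      also have "\<dots> = 2^(N-k) * z (n + j)" using sh(2) by simp
      finally have e: "q2_approx N (q2_norm k z) n = 2^(N-k) * z (n + j)" .
      have "z (n + j) mod 2^n = z n" using Z2_mod[OF z, of n "n+j"] by simp
      moreover have "z n mod 2^n = z n" using Z2_mod[OF z, of n n] by simp
      ultimately have "2^n dvd z (n + j) - z n" by (simp add: mod_eq_dvd_iff[symmetric])
      then have "2^n dvd 2^(N-k) * (z (n + j) - z n)" by (rule dvd_mult)
      then show ?thesis unfolding e by (simp add: right_diff_distrib)
    qed
    show ?thesis using nrm sh(1) odd q by (simp add: Q2_iff)
  qed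
  then show "q2_norm k z \<in> Q2" "fst (q2_norm k z) \<le> k"
    "\<And>n. 2^n dvd (q2_approx N (q2_norm k z) n - 2^(N - k) * z n)" by auto
qed

lemma Q2_snd_Z2: "p \<in> Q2 \<Longrightarrow> snd p \<in> Z2"
  by (cases p) (simp add: Q2_iff)

lemma z2_of_int_pow_mul: "z2_mul (z2_of_int c) z n = (c * z n) mod 2^n"
proof -
  have "(c mod 2^n * z n) mod 2^n = (c * z n) mod 2^n" by (simp add: mod_mult_left_eq)
  then show ?thesis by (simp add: z2_mul_def z2_of_int_def)
qed

lemma q2_add_approx: assumes x: "x \<in> Q2" and y: "y \<in> Q2" and N: "fst x + fst y \<le> N"
  shows "q2_add x y \<in> Q2" "fst (q2_add x y) \<le> fst x + fst y"
    "\<And>n. 2^n dvd (q2_approx N (q2_add x y) n - (q2_approx N x n + q2_approx N y n))"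
proof -
  obtain k z where kz: "x = (k, z)" by (cases x)
  obtain l w where lw: "y = (l, w)" by (cases y)
  have z: "z \<in> Z2" and w: "w \<in> Z2" using x y kz lw by (auto simp: Q2_iff)
  define Z where "Z = z2_add (z2_mul (z2_of_int (2 ^ l)) z) (z2_mul (z2_of_int (2 ^ k)) w)"
  have ZZ: "Z \<in> Z2" unfolding Z_def by (intro z2_add_Z2 z2_mul_Z2 z2_of_int_Z2 z w)
  have eq: "q2_add x y = q2_norm (k + l) Z" by (simp add: kz lw q2_add_def Z_def)
  have kl: "k + l \<le> N" using N kz lw by simp
  note nl = q2_norm_approx[OF ZZ kl]
  show "q2_add x y \<in> Q2" "fst (q2_add x y) \<le> fst x + fst y" using nl eq kz lw by auto
  fix n
  have Zn: "Z n = ((2^l * z n) mod 2^n + (2^k * w n) mod 2^n) mod 2^n"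
    by (simp add: Z_def z2_add_def z2_of_int_pow_mul)
  have "2^n dvd (Z n - (2^l * z n + 2^k * w n))"
  proof -
    have "Z n mod 2^n = (2^l * z n + 2^k * w n) mod 2^n" unfolding Zn by (simp add: mod_add_eq)
    then show ?thesis by (simp add: mod_eq_dvd_iff)
  qed
  then have "2^n dvd 2^(N - (k + l)) * (Z n - (2^l * z n + 2^k * w n))" by (rule dvd_mult)
  then have a: "2^n dvd (2^(N - (k + l)) * Z n - 2^(N - (k+l)) * (2^l * z n + 2^k * w n))"
    by (simp add: right_diff_distrib)
  have b: "2^(N - (k+l)) * (2^l * z n + 2^k * w n) = q2_approx N x n + q2_approx N y n"
  proof -
    have "(2::int)^(N - (k+l)) * 2^l = 2^(N - k)" using kl by (simp add: power_add[symmetric])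
    moreover have "(2::int)^(N - (k+l)) * 2^k = 2^(N - l)" using kl by (simp add: power_add[symmetric])
    ultimately show ?thesis by (simp add: kz lw q2_approx_def algebra_simps)
  qed
  have c: "2^n dvd (q2_approx N (q2_add x y) n - 2^(N - (k + l)) * Z n)" using nl(3) eq by simp
  show "2^n dvd (q2_approx N (q2_add x y) n - (q2_approx N x n + q2_approx N y n))"
    using dvd_add[OF c a] b by (simp add: algebra_simps)
qed

lemma q2_mul_approx: assumes x: "x \<in> Q2" and y: "y \<in> Q2" and N1: "fst x \<le> N1" and N2: "fst y \<le> N2"
  shows "q2_mul x y \<in> Q2" "fst (q2_mul x y) \<le> fst x + fst y"
    "\<And>n. 2^n dvd (q2_approx (N1 + N2) (q2_mul x y) n - q2_approx N1 x n * q2_approx N2 y n)"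
proof -
  obtain k z where kz: "x = (k, z)" by (cases x)
  obtain l w where lw: "y = (l, w)" by (cases y)
  have z: "z \<in> Z2" and w: "w \<in> Z2" using x y kz lw by (auto simp: Q2_iff)
  define Z where "Z = z2_mul z w"
  have ZZ: "Z \<in> Z2" unfolding Z_def by (intro z2_mul_Z2 z w)
  have eq: "q2_mul x y = q2_norm (k + l) Z" by (simp add: kz lw q2_mul_def Z_def)
  have kl: "k + l \<le> N1 + N2" using N1 N2 kz lw by simp
  note nl = q2_norm_approx[OF ZZ kl]
  show "q2_mul x y \<in> Q2" "fst (q2_mul x y) \<le> fst x + fst y" using nl eq kz lw by auto
  fix n
  have "2^n dvd (Z n - z n * w n)" unfolding Z_def z2_mul_def by (rule dvd_mod_diff)
  then have "2^n dvd 2^(N1 + N2 - (k + l)) * (Z n - z n * w n)" by (rule dvd_mult)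
  then have a: "2^n dvd (2^(N1 + N2 - (k + l)) * Z n - 2^(N1 + N2 - (k+l)) * (z n * w n))"
    by (simp add: right_diff_distrib)
  have b: "2^(N1 + N2 - (k+l)) * (z n * w n) = q2_approx N1 x n * q2_approx N2 y n"
  proof -
    have "(2::int)^(N1 + N2 - (k+l)) = 2^(N1 - k) * 2^(N2 - l)"
      using N1 N2 kz lw by (simp add: power_add[symmetric])
    then show ?thesis by (simp add: kz lw q2_approx_def algebra_simps)
  qed
  have c: "2^n dvd (q2_approx (N1 + N2) (q2_mul x y) n - 2^(N1 + N2 - (k + l)) * Z n)" using nl(3) eq by simp
  show "2^n dvd (q2_approx (N1 + N2) (q2_mul x y) n - q2_approx N1 x n * q2_approx N2 y n)"
    using dvd_add[OF c a] b by simp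
qed

lemma q2_of_int_approx: "q2_of_int c \<in> Q2" "fst (q2_of_int c) = 0" "2^n dvd (q2_approx 0 (q2_of_int c) n - c)"
  by (simp_all add: q2_of_int_def Q2_iff z2_of_int_Z2) (simp add: q2_approx_def z2_of_int_def dvd_mod_diff)

lemma q2_zero_approx: "q2_zero \<in> Q2" "fst q2_zero = 0" "q2_approx N q2_zero n = 0"
  by (simp_all add: q2_zero_def Q2_iff z2_zero_Z2) (simp add: q2_approx_def z2_zero_eq)

lemma q2_zero_if_approx_zero: assumes x: "x \<in> Q2" and N: "fst x \<le> N" and h: "\<And>n. 2^n dvd q2_approx N x n"
  shows "x = q2_zero"
proof -
  obtain k z where kz: "x = (k, z)" by (cases x)
  have z: "z \<in> Z2" using x kz by (simp add: Q2_iff)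
  have "z n = 0" for n
  proof -
    let ?m = "n + (N - k)"
    have "2^?m dvd 2^(N-k) * z ?m" using h[of ?m] kz by (simp add: q2_approx_def)
    then have "2^(N-k) * 2^n dvd 2^(N-k) * z ?m" by (simp add: power_add mult.commute)
    then have "2^n dvd z ?m" by simp
    then have "z ?m mod 2^n = 0" by simp
    then show ?thesis using Z2_mod[OF z, of n ?m] by simp
  qed
  then have zz: "z = z2_zero" by (auto simp: z2_zero_eq)
  then have "k = 0" using x kz by (simp add: Q2_iff z2_zero_eq)
  then show ?thesis using kz zz by (simp add: q2_zero_def)
qed

lemma q2_val_approx:
  assumes x: "x \<in> Q2" and nz: "x \<noteq> q2_zero" and N: "fst x \<le> N"
  shows "int N + q2_val x \<ge> 0"
    "\<forall>\<^sub>F n in sequentially. exact_pow2 (nat (int N + q2_val x)) (q2_approx N x n)"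
proof -
  obtain k z where kz: "x = (k, z)" by (cases x)
  have z: "z \<in> Z2" using x kz by (simp add: Q2_iff)
  have znz: "z \<noteq> z2_zero"
  proof
    assume "z = z2_zero"
    then have "k = 0" using x kz by (simp add: Q2_iff z2_zero_eq)
    then show False using nz kz \<open>z = z2_zero\<close> by (simp add: q2_zero_def)
  qed
  let ?v = "z2_val z"
  have e: "nat (int N + q2_val x) = (N - k) + ?v" using N kz by (simp add: q2_val_def)
  show "int N + q2_val x \<ge> 0" using N kz by (simp add: q2_val_def)
  have "exact_pow2 (N - k + ?v) (q2_approx N x n)" if n: "Suc ?v \<le> n" for n
  proof -
    have "z n mod 2 ^ Suc ?v = 2 ^ ?v" using Z2_mod_val[OF z znz n] .
    moreover have "z n = 2 ^ Suc ?v * (z n div 2 ^ Suc ?v) + z n mod 2 ^ Suc ?v" by simp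
    ultimately obtain q where "z n = 2 ^ Suc ?v * q + 2 ^ ?v" by metis
    then have "q2_approx N x n = 2^(N - k + ?v) * (2*q + 1)"
      by (simp add: kz q2_approx_def power_add algebra_simps)
    then show ?thesis by (simp add: exact_pow2_def power_Suc mult.commute[of 2])
  qed
  then show "\<forall>\<^sub>F n in sequentially. exact_pow2 (nat (int N + q2_val x)) (q2_approx N x n)"
    unfolding e eventually_sequentially by blast
qed

text \<open>K_approx N x n approximates 2^N x modulo 2^n; K_bounded D x says that the coordinates
  of x have denominators dividing 2^D.\<close>

definition K_approx :: "nat \<Rightarrow> qk \<Rightarrow> nat \<Rightarrow> zsqrt" where
  "K_approx N x n = (q2_approx N (fst x) n, q2_approx N (snd x) n)"

definition K_bounded :: "nat \<Rightarrow> qk \<Rightarrow> bool" where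
  "K_bounded D x \<longleftrightarrow> fst x \<in> Q2 \<and> snd x \<in> Q2 \<and> fst (fst x) \<le> D \<and> fst (snd x) \<le> D"

lemma K_bounded_Kset: "K_bounded D x \<Longrightarrow> x \<in> Kset"
  by (cases x) (simp add: K_bounded_def Kset_def)

lemma K_bounded_mono: "K_bounded D x \<Longrightarrow> D \<le> E \<Longrightarrow> K_bounded E x"
  by (simp add: K_bounded_def)

lemma K_add_approx: assumes x: "K_bounded D x" and y: "K_bounded E y"
  shows "K_bounded (D + E) (K_add x y)"
    "D + E \<le> N \<Longrightarrow> pi_dvd (2*n) (K_approx N (K_add x y) n - (K_approx N x n + K_approx N y n))"
proof -
  obtain p q where pq: "x = (p, q)" by (cases x)
  obtain r s where rs: "y = (r, s)" by (cases y)
  have P: "p \<in> Q2" "q \<in> Q2" "fst p \<le> D" "fst q \<le> D" using x pq by (auto simp: K_bounded_def)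
  have R: "r \<in> Q2" "s \<in> Q2" "fst r \<le> E" "fst s \<le> E" using y rs by (auto simp: K_bounded_def)
  have e: "K_add x y = (q2_add p r, q2_add q s)" by (simp add: pq rs K_add_def)
  have N1: "fst p + fst r \<le> D + E" "fst q + fst s \<le> D + E" using P R by auto
  show "K_bounded (D + E) (K_add x y)" unfolding e K_bounded_def
    using q2_add_approx(1,2)[OF P(1) R(1) order_refl] q2_add_approx(1,2)[OF P(2) R(2) order_refl] N1 by auto
  assume N: "D + E \<le> N"
  have "2^n dvd (q2_approx N (q2_add p r) n - (q2_approx N p n + q2_approx N r n))"
    using q2_add_approx(3)[OF P(1) R(1)] N1 N by simp
  moreover have "2^n dvd (q2_approx N (q2_add q s) n - (q2_approx N q n + q2_approx N s n))"
    using q2_add_approx(3)[OF P(2) R(2)] N1 N by simp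
  ultimately show "pi_dvd (2*n) (K_approx N (K_add x y) n - (K_approx N x n + K_approx N y n))"
    by (simp add: pi_dvd_even K_approx_def pq rs K_add_def)
qed

lemma int_cong_trans: "(m::int) dvd a - b \<Longrightarrow> m dvd b - c \<Longrightarrow> m dvd a - c"
  using dvd_add by fastforce

lemma int_cong_mult: "(m::int) dvd a - b \<Longrightarrow> m dvd c - e \<Longrightarrow> m dvd a * c - b * e"
proof -
  assume "m dvd a - b" "m dvd c - e"
  then have "m dvd (a - b) * c + b * (c - e)" by simp
  moreover have "(a - b) * c + b * (c - e) = a * c - b * e" by (simp add: algebra_simps)
  ultimately show ?thesis by simp
qed

lemma int_cong_add: "(m::int) dvd a - b \<Longrightarrow> m dvd c - e \<Longrightarrow> m dvd (a + c) - (b + e)"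
proof -
  assume "m dvd a - b" "m dvd c - e"
  then have "m dvd (a - b) + (c - e)" by simp
  then show ?thesis by (simp add: algebra_simps)
qed

lemma K_mul_approx: assumes x: "K_bounded D x" and y: "K_bounded 0 y"
  shows "K_bounded (2*D) (K_mul d x y)"
    "2*D \<le> N \<Longrightarrow> pi_dvd (2*n) (K_approx N (K_mul d x y) n - zmul d (K_approx N x n) (K_approx 0 y n))"
proof -
  obtain p q where pq: "x = (p, q)" by (cases x)
  obtain r s where rs: "y = (r, s)" by (cases y)
  have P: "p \<in> Q2" "q \<in> Q2" "fst p \<le> D" "fst q \<le> D" using x pq by (auto simp: K_bounded_def)
  have R: "r \<in> Q2" "s \<in> Q2" "fst r = 0" "fst s = 0" using y rs by (auto simp: K_bounded_def)
  note dd = q2_of_int_approx[where c=d]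
  have e: "K_mul d x y = (q2_add (q2_mul p r) (q2_mul (q2_of_int d) (q2_mul q s)),
      q2_add (q2_mul p s) (q2_mul q r))" by (simp add: pq rs K_mul_def)
  note m1 = q2_mul_approx[OF P(1) R(1) P(3), of 0]
  note m2 = q2_mul_approx[OF P(2) R(2) P(4), of 0]
  note m3 = q2_mul_approx[OF P(1) R(2) P(3), of 0]
  note m4 = q2_mul_approx[OF P(2) R(1) P(4), of 0]
  have f1: "q2_mul p r \<in> Q2" "fst (q2_mul p r) \<le> D" using m1 R P by auto
  have f2: "q2_mul q s \<in> Q2" "fst (q2_mul q s) \<le> D" using m2 R P by auto
  have f3: "q2_mul p s \<in> Q2" "fst (q2_mul p s) \<le> D" using m3 R P by auto
  have f4: "q2_mul q r \<in> Q2" "fst (q2_mul q r) \<le> D" using m4 R P by auto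
  note m5 = q2_mul_approx[OF dd(1) f2(1), of 0 D]
  have f5: "q2_mul (q2_of_int d) (q2_mul q s) \<in> Q2" "fst (q2_mul (q2_of_int d) (q2_mul q s)) \<le> D"
    using m5 dd f2 by auto
  note a1 = q2_add_approx[OF f1(1) f5(1), of "2*D"]
  note a2 = q2_add_approx[OF f3(1) f4(1), of "2*D"]
  have b1: "fst (q2_add (q2_mul p r) (q2_mul (q2_of_int d) (q2_mul q s))) \<le> 2*D"
    using a1 f1 f5 by fastforce
  have b2: "fst (q2_add (q2_mul p s) (q2_mul q r)) \<le> 2*D"
    using a2 f3 f4 by fastforce
  show "K_bounded (2*D) (K_mul d x y)" unfolding e K_bounded_def using a1 a2 f1 f5 f3 f4 b1 b2 by auto
  assume N: "2*D \<le> N"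
  have DN: "D \<le> N" using N by simp
  have c1: "2^n dvd q2_approx N (q2_mul p r) n - q2_approx N p n * q2_approx 0 r n"
    using q2_mul_approx(3)[OF P(1) R(1), of N 0] P DN R by simp
  have c2: "2^n dvd q2_approx N (q2_mul q s) n - q2_approx N q n * q2_approx 0 s n"
    using q2_mul_approx(3)[OF P(2) R(2), of N 0] P DN R by simp
  have c3: "2^n dvd q2_approx N (q2_mul p s) n - q2_approx N p n * q2_approx 0 s n"
    using q2_mul_approx(3)[OF P(1) R(2), of N 0] P DN R by simp
  have c4: "2^n dvd q2_approx N (q2_mul q r) n - q2_approx N q n * q2_approx 0 r n"
    using q2_mul_approx(3)[OF P(2) R(1), of N 0] P DN R by simp
  have c5: "2^n dvd q2_approx N (q2_mul (q2_of_int d) (q2_mul q s)) n - q2_approx 0 (q2_of_int d) n * q2_approx N (q2_mul q s) n"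
    using q2_mul_approx(3)[OF dd(1) f2(1), of 0 N] dd f2 DN by simp
  have c5': "2^n dvd q2_approx N (q2_mul (q2_of_int d) (q2_mul q s)) n - d * (q2_approx N q n * q2_approx 0 s n)"
    using int_cong_trans[OF c5 int_cong_mult[OF dd(3) c2]] .
  have c6: "2^n dvd q2_approx N (q2_add (q2_mul p r) (q2_mul (q2_of_int d) (q2_mul q s))) n
      - (q2_approx N (q2_mul p r) n + q2_approx N (q2_mul (q2_of_int d) (q2_mul q s)) n)"
    using q2_add_approx(3)[OF f1(1) f5(1), of N] f1 f5 N by simp
  have c7: "2^n dvd q2_approx N (q2_add (q2_mul p s) (q2_mul q r)) n - (q2_approx N (q2_mul p s) n + q2_approx N (q2_mul q r) n)"
    using q2_add_approx(3)[OF f3(1) f4(1), of N] f3 f4 N by simp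
  have g1: "2^n dvd q2_approx N (q2_add (q2_mul p r) (q2_mul (q2_of_int d) (q2_mul q s))) n
      - (q2_approx N p n * q2_approx 0 r n + d * (q2_approx N q n * q2_approx 0 s n))"
    using int_cong_trans[OF c6 int_cong_add[OF c1 c5']] .
  have g2: "2^n dvd q2_approx N (q2_add (q2_mul p s) (q2_mul q r)) n - (q2_approx N p n * q2_approx 0 s n + q2_approx N q n * q2_approx 0 r n)"
    using int_cong_trans[OF c7 int_cong_add[OF c3 c4]] .
  show "pi_dvd (2*n) (K_approx N (K_mul d x y) n - zmul d (K_approx N x n) (K_approx 0 y n))"
    unfolding pi_dvd_even using g1 g2 by (simp add: K_mul_def K_approx_def pq rs algebra_simps)
qed

lemma K_pow_approx: assumes x: "K_bounded 0 x" and d: "even d"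
  shows "K_bounded 0 (K_pow d x k) \<and> pi_dvd (2*n) (K_approx 0 (K_pow d x k) n - zpow d (K_approx 0 x n) k)"
proof (induction k)
  case 0
  have "2^n dvd q2_approx 0 (q2_of_int 1) n - 1" using q2_of_int_approx(3)[of n 1] by simp
  then show ?case using q2_of_int_approx[of 1] q2_zero_approx
    by (simp add: K_bounded_def K_approx_def pi_dvd_even)
next
  case (Suc k)
  have b: "K_bounded 0 (K_pow d x (Suc k))" using K_mul_approx(1)[OF x, of "K_pow d x k" d] Suc by simp
  have a: "pi_dvd (2*n) (K_approx 0 (K_pow d x (Suc k)) n - zmul d (K_approx 0 x n) (K_approx 0 (K_pow d x k) n))"
    using K_mul_approx(2)[OF x, of "K_pow d x k" 0 n d] Suc by simp
  have c: "pi_dvd (2*n) (zmul d (K_approx 0 x n) (K_approx 0 (K_pow d x k) n) - zmul d (K_approx 0 x n) (zpow d (K_approx 0 x n) k))"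
    by (rule pi_dvd_cong_mul) (use Suc d in simp_all)
  show ?case using b pi_dvd_trans[OF a c] by simp
qed

lemma K_sum_approx: assumes "\<And>i. i \<in> set is \<Longrightarrow> K_bounded D (f i)"
  shows "K_bounded (length is * D) (K_sum f is)"
    "length is * D \<le> N \<Longrightarrow> pi_dvd (2*n) (K_approx N (K_sum f is) n - (\<Sum>i\<leftarrow>is. K_approx N (f i) n))"
proof -
  have "K_bounded (length is * D) (K_sum f is) \<and> (length is * D \<le> N \<longrightarrow> pi_dvd (2*n) (K_approx N (K_sum f is) n - (\<Sum>i\<leftarrow>is. K_approx N (f i) n)))"
    using assms
  proof (induction "is")
    case Nil
    then show ?case using q2_zero_approx by (simp add: K_sum_def K_zero_def K_bounded_def K_approx_def pi_dvd_def)
  next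
    case (Cons i "is")
    have fi: "K_bounded D (f i)" using Cons.prems by simp
    have IH: "K_bounded (length is * D) (K_sum f is)" "length is * D \<le> N \<Longrightarrow> pi_dvd (2*n) (K_approx N (K_sum f is) n - (\<Sum>i\<leftarrow>is. K_approx N (f i) n))"
      using Cons by auto
    have ks: "K_sum f (i # is) = K_add (f i) (K_sum f is)" by (simp add: K_sum_def)
    note A = K_add_approx[OF fi IH(1)]
    have "K_bounded (length (i # is) * D) (K_sum f (i # is))" using A(1) ks by (simp add: add.commute)
    moreover have "pi_dvd (2*n) (K_approx N (K_sum f (i # is)) n - (\<Sum>i\<leftarrow>i # is. K_approx N (f i) n))"
      if N: "length (i # is) * D \<le> N"
    proof -
      have N': "D + length is * D \<le> N" using N by simp
      have a: "pi_dvd (2*n) (K_approx N (K_sum f (i # is)) n - (K_approx N (f i) n + K_approx N (K_sum f is) n))"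
        using A(2)[OF N'] ks by simp
      have b: "pi_dvd (2*n) ((K_approx N (f i) n + K_approx N (K_sum f is) n) - (K_approx N (f i) n + (\<Sum>i\<leftarrow>is. K_approx N (f i) n)))"
        using IH(2) N' by simp
      show ?thesis using pi_dvd_trans[OF a b] by simp
    qed
    ultimately show ?case by blast
  qed
  then show "K_bounded (length is * D) (K_sum f is)"
    "length is * D \<le> N \<Longrightarrow> pi_dvd (2*n) (K_approx N (K_sum f is) n - (\<Sum>i\<leftarrow>is. K_approx N (f i) n))" by auto
qed

lemma K_zero_if_approx_zero: assumes x: "K_bounded N x" and h: "\<And>n. pi_dvd (2*n) (K_approx N x n)"
  shows "x = K_zero"
proof -
  obtain p q where pq: "x = (p, q)" by (cases x)
  have P: "p \<in> Q2" "q \<in> Q2" "fst p \<le> N" "fst q \<le> N" using x pq by (auto simp: K_bounded_def)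
  have "p = q2_zero" using q2_zero_if_approx_zero[OF P(1) P(3)] h pq by (simp add: pi_dvd_even K_approx_def)
  moreover have "q = q2_zero" using q2_zero_if_approx_zero[OF P(2) P(4)] h pq by (simp add: pi_dvd_even K_approx_def)
  ultimately show ?thesis using pq by (simp add: K_zero_def)
qed

definition K_of_seq :: "(nat \<Rightarrow> zsqrt) \<Rightarrow> qk" where
  "K_of_seq X = ((0, \<lambda>n. fst (X n)), (0, \<lambda>n. snd (X n)))"

lemma K_of_seq_approx: assumes c: "coherent X" and r: "\<And>n. ztrunc n (X n) = X n"
  shows "K_bounded 0 (K_of_seq X)" "K_approx 0 (K_of_seq X) n = X n"
proof -
  have rr: "0 \<le> fst (X n) \<and> fst (X n) < 2^n \<and> 0 \<le> snd (X n) \<and> snd (X n) < 2^n" for n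
    using ztrunc_range[of n "X n"] r[of n] by simp
  have cc: "fst (X (Suc n)) mod 2^n = fst (X n) \<and> snd (X (Suc n)) mod 2^n = snd (X n)" for n
  proof -
    have "pi_dvd (2*n) (X (Suc n) - X n)" using c coherent_def by blast
    then have "ztrunc n (X (Suc n)) = ztrunc n (X n)" by (rule ztrunc_eq)
    then have "ztrunc n (X (Suc n)) = X n" using r by simp
    then show ?thesis by (simp add: ztrunc_def prod_eq_iff)
  qed
  have "(\<lambda>n. fst (X n)) \<in> Z2" "(\<lambda>n. snd (X n)) \<in> Z2" using rr cc by (auto simp: Z2_iff)
  then show "K_bounded 0 (K_of_seq X)" by (simp add: K_of_seq_def K_bounded_def Q2_iff)
  show "K_approx 0 (K_of_seq X) n = X n" by (simp add: K_of_seq_def K_approx_def q2_approx_def)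
qed

lemma K_of_seq_eq_zeroD: "K_of_seq X = K_zero \<Longrightarrow> X n = 0"
  by (simp add: K_of_seq_def K_zero_def q2_zero_def z2_zero_eq fun_eq_iff prod_eq_iff)

lemma K_approx_coherent: assumes "K_bounded D a" "D \<le> N" shows "coherent (K_approx N a)"
proof -
  obtain p q where pq: "a = (p, q)" by (cases a)
  have z: "snd p \<in> Z2" "snd q \<in> Z2" using assms pq by (auto simp: K_bounded_def Q2_snd_Z2)
  have c: "2^n dvd (2^k * z (Suc n) - 2^k * z n)" if "z \<in> Z2" for z :: z2 and k n
  proof -
    have "z (Suc n) mod 2^n = z n mod 2^n" using that Z2_mod[OF that, of n n] by (simp add: Z2_iff)
    then have "2^n dvd z (Suc n) - z n" by (simp add: mod_eq_dvd_iff)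
    then have "2^n dvd 2^k * (z (Suc n) - z n)" by (rule dvd_mult)
    then show ?thesis by (simp add: right_diff_distrib)
  qed
  show ?thesis unfolding coherent_def pi_dvd_even K_approx_def q2_approx_def using c z pq by simp
qed

lemma K_val_approx:
  assumes a: "K_bounded D a" and nz: "a \<noteq> K_zero" and N: "D \<le> N"
  shows "K_val a + 2 * int N \<ge> 0"
    "\<forall>\<^sub>F n in sequentially. pi_exact (nat (K_val a + 2 * int N)) (K_approx N a n)"
proof -
  obtain p q where pq: "a = (p, q)" by (cases a)
  have P: "p \<in> Q2" "q \<in> Q2" "fst p \<le> N" "fst q \<le> N" using a pq N by (auto simp: K_bounded_def)
  define e1 where "e1 = nat (int N + q2_val p)"
  define e2 where "e2 = nat (int N + q2_val q)"
  have approx_zero: "q2_approx N q2_zero n = 0" for n using q2_zero_approx(3) .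
  consider "p = q2_zero" "q \<noteq> q2_zero" | "p \<noteq> q2_zero" "q = q2_zero" | "p \<noteq> q2_zero" "q \<noteq> q2_zero"
    using nz pq by (auto simp: K_zero_def)
  then have "K_val a + 2 * int N \<ge> 0 \<and>
      (\<forall>\<^sub>F n in sequentially. pi_exact (nat (K_val a + 2 * int N)) (K_approx N a n))"
  proof cases
    case 1
    note v = q2_val_approx[OF P(2) \<open>q \<noteq> q2_zero\<close> P(4), folded e2_def]
    have "nat (K_val a + 2 * int N) = Suc (2 * e2)" using 1 pq v(1) by (simp add: K_val_def e2_def)
    moreover have "\<forall>\<^sub>F n in sequentially. pi_exact (Suc (2 * e2)) (K_approx N a n)"
      using v(2) by (rule eventually_mono) (simp add: 1 pq K_approx_def approx_zero pi_exact_sqrt_part)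
    ultimately show ?thesis using 1 pq v(1) by (simp add: K_val_def)
  next
    case 2
    note v = q2_val_approx[OF P(1) \<open>p \<noteq> q2_zero\<close> P(3), folded e1_def]
    have "nat (K_val a + 2 * int N) = 2 * e1" using 2 pq v(1) by (simp add: K_val_def e1_def)
    moreover have "\<forall>\<^sub>F n in sequentially. pi_exact (2 * e1) (K_approx N a n)"
      using v(2) by (rule eventually_mono) (simp add: 2 pq K_approx_def approx_zero pi_exact_rational_part)
    ultimately show ?thesis using 2 pq v(1) by (simp add: K_val_def)
  next
    case 3
    note v1 = q2_val_approx[OF P(1) \<open>p \<noteq> q2_zero\<close> P(3), folded e1_def]
    note v2 = q2_val_approx[OF P(2) \<open>q \<noteq> q2_zero\<close> P(4), folded e2_def]
    have "nat (K_val a + 2 * int N) = min (2 * e1) (Suc (2 * e2))"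
      using 3 pq v1(1) v2(1) by (simp add: K_val_def e1_def e2_def)
    moreover have "\<forall>\<^sub>F n in sequentially. pi_exact (min (2 * e1) (Suc (2 * e2))) (K_approx N a n)"
      using eventually_conj[OF v1(2) v2(2)]
      by (rule eventually_mono) (simp add: pq K_approx_def pi_exact_pair)
    ultimately show ?thesis using 3 pq v1(1) v2(1) by (simp add: K_val_def)
  qed
  then show "K_val a + 2 * int N \<ge> 0"
    "\<forall>\<^sub>F n in sequentially. pi_exact (nat (K_val a + 2 * int N)) (K_approx N a n)" by auto
qed

section \<open>Solving the form modulo \<pi>^9\<close>

lemma admissible_mod4: "d \<in> {2, 10, -2, -10} \<Longrightarrow> d mod 4 = (2::int)"
  by auto

text \<open>For the four admissible d, the fourth powers of units modulo \<pi>^9 are exactly the classes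
  1 + h with h in the subgroup H defined by in_H d, which has index 2 in \<pi>^5 \<int>[\<surd>d].\<close>

definition H_form :: "int \<Rightarrow> zsqrt \<Rightarrow> int" where
  "H_form d h = (if d mod 8 = 2 then fst h else fst h + 2 * snd h)"

definition in_H :: "int \<Rightarrow> zsqrt \<Rightarrow> bool" where
  "in_H d h \<longleftrightarrow> pi_dvd 5 h \<and> 16 dvd H_form d h"

lemma pi_dvd5_iff: "pi_dvd 5 h \<longleftrightarrow> 8 dvd fst h \<and> 4 dvd snd h" by (simp add: pi_dvd_def)
lemma pi_dvd9_iff: "pi_dvd 9 h \<longleftrightarrow> 32 dvd fst h \<and> 16 dvd snd h" by (simp add: pi_dvd_def)

lemma H_form_add: "H_form d (x + y) = H_form d x + H_form d y" by (simp add: H_form_def)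
lemma H_form_minus: "H_form d (- x) = - H_form d x" by (simp add: H_form_def)

lemma in_H_add: "in_H d x \<Longrightarrow> in_H d y \<Longrightarrow> in_H d (x + y)"
  by (simp add: in_H_def H_form_add pi_dvd_add)
lemma in_H_uminus: "in_H d x \<Longrightarrow> in_H d (- x)"
  by (simp add: in_H_def H_form_minus pi_dvd_uminus)
lemma in_H_cong: assumes "pi_dvd 9 (x - y)" "in_H d y" shows "in_H d x"
proof -
  have "pi_dvd 5 (x - y)" using assms(1) pi_dvd_mono by fastforce
  moreover have "16 dvd H_form d (x - y)"
  proof -
    have a: "32 dvd fst (x - y)" "16 dvd snd (x - y)" using assms(1) unfolding pi_dvd9_iff by auto
    have b: "16 dvd fst (x - y)" using a(1) by (rule dvd_trans[rotated]) simp
    have c: "16 dvd 2 * snd (x - y)" using a(2) by (rule dvd_mult)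
    show ?thesis unfolding H_form_def using b c by simp
  qed
  ultimately have "in_H d (x - y)" by (simp add: in_H_def)
  then show ?thesis using in_H_add[of d "x - y" y] assms(2) by simp
qed

lemma in_H_index2: assumes "pi_dvd 5 x" "pi_dvd 5 y" "\<not> in_H d x" "\<not> in_H d y" shows "in_H d (x + y)"
proof -
  have a: "8 dvd fst x" "4 dvd snd x" "8 dvd fst y" "4 dvd snd y" using assms(1,2) by (auto simp: pi_dvd5_iff)
  have b: "\<not> 16 dvd H_form d x" "\<not> 16 dvd H_form d y" using assms by (auto simp: in_H_def)
  have "16 dvd H_form d x + H_form d y" using a b unfolding H_form_def by (cases "d mod 8 = 2") (simp_all, presburger+)
  then show ?thesis using assms(1,2) pi_dvd_add by (simp add: in_H_def H_form_add)
qed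

lemma in_H_mult_unit: assumes d: "even d" and w: "odd (fst w)" "even (snd w)" and h: "in_H d h"
  shows "in_H d (zmul d w h)"
proof -
  obtain a b where ab: "w = (a, b)" by (cases w)
  obtain b' where b': "b = 2 * b'" using w ab by auto
  obtain h1 h2 where hh: "h = (h1, h2)" by (cases h)
  obtain k1 where k1: "h1 = 8 * k1" using h hh by (auto simp: in_H_def pi_dvd5_iff)
  obtain k2 where k2: "h2 = 4 * k2" using h hh by (auto simp: in_H_def pi_dvd5_iff)
  obtain e where e: "d = 2 * e" using d by blast
  have H: "16 dvd H_form d h" using h by (simp add: in_H_def)
  have f: "fst (zmul d w h) = 8 * (a * k1 + 2 * e * b' * k2)" using ab b' k1 k2 e hh by (simp add: algebra_simps)
  have s: "snd (zmul d w h) = 4 * (a * k2 + 4 * b' * k1)" using ab b' k1 k2 e hh by (simp add: algebra_simps)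
  have p5: "pi_dvd 5 (zmul d w h)" unfolding pi_dvd5_iff f s by simp
  have "16 dvd H_form d (zmul d w h)"
  proof (cases "d mod 8 = 2")
    case True
    then have "16 dvd h1" using H hh by (simp add: H_form_def)
    then obtain m where m: "h1 = 16 * m" by blast
    have "fst (zmul d w h) = 16 * (a * m + e * b' * k2)" using ab b' m k2 e hh by (simp add: algebra_simps)
    then show ?thesis using True by (simp add: H_form_def)
  next
    case False
    then have "16 dvd h1 + 2 * h2" using H hh by (simp add: H_form_def)
    then obtain m where m: "h1 + 2 * h2 = 16 * m" by blast
    have "fst (zmul d w h) + 2 * snd (zmul d w h) = a * (h1 + 2 * h2) + 2 * b * (e * h2 + h1)"
      using ab hh e by (simp add: algebra_simps)
    also have "\<dots> = 16 * (a * m + b' * (e * k2 + 2 * k1))" using m b' k1 k2 by (simp add: algebra_simps)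
    finally show ?thesis using False by (simp add: H_form_def)
  qed
  then show ?thesis using p5 by (simp add: in_H_def)
qed

lemma fourth_root_from_residues:
  assumes "fst h mod 32 = A" "snd h mod 16 = B" "32 dvd fst (zpow d y 4) - 1 - A" "16 dvd snd (zpow d y 4) - B" "odd (fst y)"
  shows "\<exists>y. zunit y \<and> pi_dvd 9 (zpow d y 4 - (1,0) - h)"
proof -
  have "32 dvd fst (zpow d y 4) - 1 - fst h" using assms(1,3) by presburger
  moreover have "16 dvd snd (zpow d y 4) - snd h" using assms(2,4) by presburger
  ultimately show ?thesis using assms(5) by (intro exI[of _ y]) (simp add: zunit_def pi_dvd9_iff)
qed

text \<open>The eight classes of H modulo \<pi>^9, each with a fourth root of 1 + h of the form
  a + b \<surd>d, a \<in> {1, 3}, b \<in> {0, ..., 3}, found by tabulating these fourth powers.\<close>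

lemma fourth_root_mod_pi9_2: assumes "in_H 2 h" shows "\<exists>y. zunit y \<and> pi_dvd 9 (zpow 2 y 4 - (1,0) - h)"
proof -
  have h: "8 dvd fst h" "4 dvd snd h" "16 dvd H_form 2 h" using assms by (auto simp: in_H_def pi_dvd5_iff)
  have "(fst h mod 32 = 0 \<and> snd h mod 16 = 0) \<or>
    (fst h mod 32 = 0 \<and> snd h mod 16 = 4) \<or>
    (fst h mod 32 = 0 \<and> snd h mod 16 = 8) \<or>
    (fst h mod 32 = 0 \<and> snd h mod 16 = 12) \<or>
    (fst h mod 32 = 16 \<and> snd h mod 16 = 0) \<or>
    (fst h mod 32 = 16 \<and> snd h mod 16 = 4) \<or>
    (fst h mod 32 = 16 \<and> snd h mod 16 = 8) \<or>
    (fst h mod 32 = 16 \<and> snd h mod 16 = 12)"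
    using h unfolding H_form_def by simp presburger
  then show ?thesis
    apply (elim disjE conjE)
    apply (rule fourth_root_from_residues[where y = "(1,0)"], assumption, assumption, simp add: zpow4 zmul_def, simp add: zpow4 zmul_def, simp)
    apply (rule fourth_root_from_residues[where y = "(3,1)"], assumption, assumption, simp add: zpow4 zmul_def, simp add: zpow4 zmul_def, simp)
    apply (rule fourth_root_from_residues[where y = "(3,2)"], assumption, assumption, simp add: zpow4 zmul_def, simp add: zpow4 zmul_def, simp)
    apply (rule fourth_root_from_residues[where y = "(3,3)"], assumption, assumption, simp add: zpow4 zmul_def, simp add: zpow4 zmul_def, simp)
    apply (rule fourth_root_from_residues[where y = "(3,0)"], assumption, assumption, simp add: zpow4 zmul_def, simp add: zpow4 zmul_def, simp)
    apply (rule fourth_root_from_residues[where y = "(1,3)"], assumption, assumption, simp add: zpow4 zmul_def, simp add: zpow4 zmul_def, simp)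
    apply (rule fourth_root_from_residues[where y = "(1,2)"], assumption, assumption, simp add: zpow4 zmul_def, simp add: zpow4 zmul_def, simp)
    apply (rule fourth_root_from_residues[where y = "(1,1)"], assumption, assumption, simp add: zpow4 zmul_def, simp add: zpow4 zmul_def, simp)
    done
qed

lemma fourth_root_mod_pi9_10: assumes "in_H 10 h" shows "\<exists>y. zunit y \<and> pi_dvd 9 (zpow 10 y 4 - (1,0) - h)"
proof -
  have h: "8 dvd fst h" "4 dvd snd h" "16 dvd H_form 10 h" using assms by (auto simp: in_H_def pi_dvd5_iff)
  have "(fst h mod 32 = 0 \<and> snd h mod 16 = 0) \<or>
    (fst h mod 32 = 0 \<and> snd h mod 16 = 4) \<or>
    (fst h mod 32 = 0 \<and> snd h mod 16 = 8) \<or>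
    (fst h mod 32 = 0 \<and> snd h mod 16 = 12) \<or>
    (fst h mod 32 = 16 \<and> snd h mod 16 = 0) \<or>
    (fst h mod 32 = 16 \<and> snd h mod 16 = 4) \<or>
    (fst h mod 32 = 16 \<and> snd h mod 16 = 8) \<or>
    (fst h mod 32 = 16 \<and> snd h mod 16 = 12)"
    using h unfolding H_form_def by simp presburger
  then show ?thesis
    apply (elim disjE conjE)
    apply (rule fourth_root_from_residues[where y = "(1,0)"], assumption, assumption, simp add: zpow4 zmul_def, simp add: zpow4 zmul_def, simp)
    apply (rule fourth_root_from_residues[where y = "(1,3)"], assumption, assumption, simp add: zpow4 zmul_def, simp add: zpow4 zmul_def, simp)
    apply (rule fourth_root_from_residues[where y = "(3,2)"], assumption, assumption, simp add: zpow4 zmul_def, simp add: zpow4 zmul_def, simp)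
    apply (rule fourth_root_from_residues[where y = "(1,1)"], assumption, assumption, simp add: zpow4 zmul_def, simp add: zpow4 zmul_def, simp)
    apply (rule fourth_root_from_residues[where y = "(3,0)"], assumption, assumption, simp add: zpow4 zmul_def, simp add: zpow4 zmul_def, simp)
    apply (rule fourth_root_from_residues[where y = "(3,1)"], assumption, assumption, simp add: zpow4 zmul_def, simp add: zpow4 zmul_def, simp)
    apply (rule fourth_root_from_residues[where y = "(1,2)"], assumption, assumption, simp add: zpow4 zmul_def, simp add: zpow4 zmul_def, simp)
    apply (rule fourth_root_from_residues[where y = "(3,3)"], assumption, assumption, simp add: zpow4 zmul_def, simp add: zpow4 zmul_def, simp)
    done
qed

lemma fourth_root_mod_pi9_m2: assumes "in_H (-2) h" shows "\<exists>y. zunit y \<and> pi_dvd 9 (zpow (-2) y 4 - (1,0) - h)"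
proof -
  have h: "8 dvd fst h" "4 dvd snd h" "16 dvd H_form (-2) h" using assms by (auto simp: in_H_def pi_dvd5_iff)
  have "(fst h mod 32 = 0 \<and> snd h mod 16 = 0) \<or>
    (fst h mod 32 = 0 \<and> snd h mod 16 = 8) \<or>
    (fst h mod 32 = 8 \<and> snd h mod 16 = 4) \<or>
    (fst h mod 32 = 8 \<and> snd h mod 16 = 12) \<or>
    (fst h mod 32 = 16 \<and> snd h mod 16 = 0) \<or>
    (fst h mod 32 = 16 \<and> snd h mod 16 = 8) \<or>
    (fst h mod 32 = 24 \<and> snd h mod 16 = 4) \<or>
    (fst h mod 32 = 24 \<and> snd h mod 16 = 12)"
    using h unfolding H_form_def by simp presburger
  then show ?thesis
    apply (elim disjE conjE)
    apply (rule fourth_root_from_residues[where y = "(1,0)"], assumption, assumption, simp add: zpow4 zmul_def, simp add: zpow4 zmul_def, simp)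
    apply (rule fourth_root_from_residues[where y = "(3,2)"], assumption, assumption, simp add: zpow4 zmul_def, simp add: zpow4 zmul_def, simp)
    apply (rule fourth_root_from_residues[where y = "(3,1)"], assumption, assumption, simp add: zpow4 zmul_def, simp add: zpow4 zmul_def, simp)
    apply (rule fourth_root_from_residues[where y = "(3,3)"], assumption, assumption, simp add: zpow4 zmul_def, simp add: zpow4 zmul_def, simp)
    apply (rule fourth_root_from_residues[where y = "(3,0)"], assumption, assumption, simp add: zpow4 zmul_def, simp add: zpow4 zmul_def, simp)
    apply (rule fourth_root_from_residues[where y = "(1,2)"], assumption, assumption, simp add: zpow4 zmul_def, simp add: zpow4 zmul_def, simp)
    apply (rule fourth_root_from_residues[where y = "(1,3)"], assumption, assumption, simp add: zpow4 zmul_def, simp add: zpow4 zmul_def, simp)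
    apply (rule fourth_root_from_residues[where y = "(1,1)"], assumption, assumption, simp add: zpow4 zmul_def, simp add: zpow4 zmul_def, simp)
    done
qed

lemma fourth_root_mod_pi9_m10: assumes "in_H (-10) h" shows "\<exists>y. zunit y \<and> pi_dvd 9 (zpow (-10) y 4 - (1,0) - h)"
proof -
  have h: "8 dvd fst h" "4 dvd snd h" "16 dvd H_form (-10) h" using assms by (auto simp: in_H_def pi_dvd5_iff)
  have "(fst h mod 32 = 0 \<and> snd h mod 16 = 0) \<or>
    (fst h mod 32 = 0 \<and> snd h mod 16 = 8) \<or>
    (fst h mod 32 = 8 \<and> snd h mod 16 = 4) \<or>
    (fst h mod 32 = 8 \<and> snd h mod 16 = 12) \<or>
    (fst h mod 32 = 16 \<and> snd h mod 16 = 0) \<or>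
    (fst h mod 32 = 16 \<and> snd h mod 16 = 8) \<or>
    (fst h mod 32 = 24 \<and> snd h mod 16 = 4) \<or>
    (fst h mod 32 = 24 \<and> snd h mod 16 = 12)"
    using h unfolding H_form_def by simp presburger
  then show ?thesis
    apply (elim disjE conjE)
    apply (rule fourth_root_from_residues[where y = "(1,0)"], assumption, assumption, simp add: zpow4 zmul_def, simp add: zpow4 zmul_def, simp)
    apply (rule fourth_root_from_residues[where y = "(3,2)"], assumption, assumption, simp add: zpow4 zmul_def, simp add: zpow4 zmul_def, simp)
    apply (rule fourth_root_from_residues[where y = "(1,3)"], assumption, assumption, simp add: zpow4 zmul_def, simp add: zpow4 zmul_def, simp)
    apply (rule fourth_root_from_residues[where y = "(1,1)"], assumption, assumption, simp add: zpow4 zmul_def, simp add: zpow4 zmul_def, simp)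
    apply (rule fourth_root_from_residues[where y = "(3,0)"], assumption, assumption, simp add: zpow4 zmul_def, simp add: zpow4 zmul_def, simp)
    apply (rule fourth_root_from_residues[where y = "(1,2)"], assumption, assumption, simp add: zpow4 zmul_def, simp add: zpow4 zmul_def, simp)
    apply (rule fourth_root_from_residues[where y = "(3,1)"], assumption, assumption, simp add: zpow4 zmul_def, simp add: zpow4 zmul_def, simp)
    apply (rule fourth_root_from_residues[where y = "(3,3)"], assumption, assumption, simp add: zpow4 zmul_def, simp add: zpow4 zmul_def, simp)
    done
qed

lemma fourth_root_mod_pi9:
  assumes "d \<in> {2, 10, -2, -10}" "in_H d h"
  shows "\<exists>y. zunit y \<and> pi_dvd 9 (zpow d y 4 - (1,0) - h)"
proof -
  consider "d = 2" | "d = 10" | "d = -2" | "d = -10" using assms(1) by auto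
  then show ?thesis
  proof cases
    case 1 then show ?thesis using fourth_root_mod_pi9_2 assms(2) by blast
  next
    case 2 then show ?thesis using fourth_root_mod_pi9_10 assms(2) by blast
  next
    case 3 then show ?thesis using fourth_root_mod_pi9_m2[of h] assms(2) by simp
  next
    case 4 then show ?thesis using fourth_root_mod_pi9_m10[of h] assms(2) by simp
  qed
qed

lemma zpow4_unit_cong: assumes d: "d mod 4 = 2" and u: "zunit u" shows "pi_dvd 5 (zpow d u 4 - (1,0))"
proof -
  have de: "even d" using d by presburger
  define z where "z = u - (1,0)"
  have z1: "pi_dvd 1 z" using u unfolding z_def zunit_def pi_dvd_def by simp
  have u': "u = (1,0) + z" unfolding z_def by simp
  have e: "zpow d u 4 - (1,0) = zmul d (4,0) (zmul d (zpow d (1,0) 3) z) + zmul d (zmul d z z) (quartic_tail d (1,0) z)"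
    unfolding u' zpow4_add_expand by (simp add: zpow4 numeral_eq_Suc)
  have a: "pi_dvd 5 (zmul d (4,0) (zmul d (zpow d (1,0) 3) z))"
  proof -
    have "pi_dvd 4 (4::int, 0::int)" by (simp add: pi_dvd_def)
    from pi_dvd_mul[OF de this pi_dvd_mul_right[OF de z1, of "zpow d (1,0) 3"]] show ?thesis by simp
  qed
  have b: "pi_dvd 5 (zmul d (zmul d z z) (quartic_tail d (1,0) z))"
  proof (cases "pi_dvd 2 z")
    case True
    have "pi_dvd 4 (zmul d z z)" using pi_dvd_mul[OF de True True] by simp
    moreover have "pi_dvd 2 (quartic_tail d (1,0) z)" using pi_dvd_quartic_tail[OF de z1] .
    ultimately have "pi_dvd (4 + 2) (zmul d (zmul d z z) (quartic_tail d (1,0) z))" by (rule pi_dvd_mul[OF de])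
    then show ?thesis by (rule pi_dvd_mono) simp
  next
    case False
    then have "pi_exact (Suc (2*0)) z" using z1 by (simp add: pi_exact_def numeral_2_eq_2)
    then obtain a b where ab: "odd b" "z = (2 * a, b)" using pi_exact_odd[of 0 z] by auto
    obtain e where e: "d = 2 * e" "odd e" using d_mod4_half[OF d] by blast
    have zz: "pi_dvd 2 (zmul d z z)" using pi_dvd_mul[OF de z1 z1] by (simp add: numeral_2_eq_2)
    have "fst (quartic_tail d (1,0) z) = 6 + 8 * a + 4 * (a * a) + 2 * (e * b * b)" using ab e
      by (simp add: quartic_tail_def algebra_simps)
    moreover have "odd (e * b * b)" using ab e by simp
    moreover have "4 dvd 6 + 8 * a' + 4 * s + 2 * t" if "odd t" for a' s t :: int
      using that by presburger
    ultimately have "4 dvd fst (quartic_tail d (1,0) z)" by metis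
    moreover have "snd (quartic_tail d (1,0) z) = 4 * b + 4 * a * b" using ab by (simp add: quartic_tail_def algebra_simps)
    ultimately have "pi_dvd 3 (quartic_tail d (1,0) z)" by (simp add: pi_dvd_def)
    from pi_dvd_mul[OF de zz this] show ?thesis by simp
  qed
  show ?thesis unfolding e using a b pi_dvd_add by blast
qed

definition H_witness :: "int \<Rightarrow> zsqrt" where "H_witness d = (if d mod 8 = 2 then (0, 4) else (8, 4))"

lemma in_H_H_witness: "in_H d (H_witness d)"
  by (simp add: H_witness_def in_H_def H_form_def pi_dvd5_iff)

lemma H_witness_mult_odd: assumes d: "d mod 4 = 2" and u: "odd (fst u)" "odd (snd u)"
  shows "pi_dvd 5 (zmul d u (H_witness d)) \<and> \<not> in_H d (zmul d u (H_witness d))"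
proof -
  obtain a b where ab: "u = (a, b)" by (cases u)
  obtain e where e: "d = 2 * e" "odd e" using d_mod4_half[OF d] by blast
  have ob: "odd (e * b)" using e u ab by simp
  show ?thesis
  proof (cases "d mod 8 = 2")
    case True
    have f: "fst (zmul d u (H_witness d)) = 8 * (e * b)" using True ab e by (simp add: H_witness_def)
    have s: "snd (zmul d u (H_witness d)) = 4 * a" using True ab by (simp add: H_witness_def)
    have "\<not> 16 dvd 8 * t" if "odd t" for t :: int using that by presburger
    then have "\<not> 16 dvd 8 * (e * b)" using ob by blast
    then show ?thesis using f s True by (simp add: in_H_def H_form_def pi_dvd5_iff)
  next
    case False
    have f: "fst (zmul d u (H_witness d)) = 8 * a + 8 * (e * b)" using False ab e by (simp add: H_witness_def)
    have s: "snd (zmul d u (H_witness d)) = 4 * a + 8 * b" using False ab by (simp add: H_witness_def)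
    have "\<not> 16 dvd 8 * a' + 8 * t + 2 * (4 * a' + 8 * b')" if "odd t" for a' b' t :: int
      using that by presburger
    then have "\<not> 16 dvd 8 * a + 8 * (e * b) + 2 * (4 * a + 8 * b)" using ob by blast
    moreover have "8 dvd 8 * a + 8 * (e * b)" "4 dvd 4 * a + 8 * b" by presburger+
    ultimately show ?thesis using f s False by (simp add: in_H_def H_form_def pi_dvd5_iff)
  qed
qed

lemma zpow_one: "zpow d (1,0) k = (1,0)" by (induction k) simp_all

text \<open>With h = -u^3 G \<in> H one has G + u (y^4 - 1) \<equiv> u (y^4 - 1 - h) modulo \<pi>^10, because
  u^4 \<equiv> 1 modulo \<pi>^5 and G \<in> \<pi>^5.\<close>

lemma adjust_even_unit: assumes d: "d \<in> {2, 10, -2, -10}" and u: "odd (fst u)" "even (snd u)" and G: "in_H d G"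
  shows "\<exists>y. zunit y \<and> pi_dvd 9 (G + zmul d u (zpow d y 4 - (1,0)))"
proof -
  have d4: "d mod 4 = 2" using admissible_mod4[OF d] .
  have de: "even d" using d4 by presburger
  have u3: "odd (fst (zpow d u 3)) \<and> even (snd (zpow d u 3))"
    using u de by (simp add: numeral_eq_Suc)
  define h where "h = - zmul d (zpow d u 3) G"
  have hH: "in_H d h" unfolding h_def using in_H_uminus in_H_mult_unit[OF de] u3 G by blast
  obtain y where y: "zunit y" "pi_dvd 9 (zpow d y 4 - (1,0) - h)" using fourth_root_mod_pi9[OF d hH] by blast
  have u_unit: "zunit u" using u by (simp add: zunit_def)
  have p4: "zpow d u 4 = zmul d u (zpow d u 3)" by (simp add: eval_nat_numeral)
  have uh: "zmul d u h = - zmul d (zpow d u 4) G" unfolding h_def p4 by (simp add: zmul_minus_right zmul_assoc)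
  have e: "G + zmul d u (zpow d y 4 - (1,0)) = zmul d u (zpow d y 4 - (1,0) - h) - zmul d (zpow d u 4 - (1,0)) G"
    by (simp add: zmul_diff_right zmul_diff_left uh)
  have a: "pi_dvd 9 (zmul d u (zpow d y 4 - (1,0) - h))" using pi_dvd_mul_right[OF de y(2)] .
  have "pi_dvd 10 (zmul d (zpow d u 4 - (1,0)) G)"
    using pi_dvd_mul[OF de zpow4_unit_cong[OF d4 u_unit] in_H_def[THEN iffD1, OF G, THEN conjunct1]] by simp
  then have b: "pi_dvd 9 (zmul d (zpow d u 4 - (1,0)) G)" using pi_dvd_mono by fastforce
  show ?thesis using y(1) pi_dvd_diff[OF a b] unfolding e[symmetric] by blast
qed

text \<open>If G \<notin> H then also u \<cdot> H_witness d \<notin> H, as the \<surd>d-coordinate of u is odd; H having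
  index 2, their sum lies in H.\<close>

lemma adjust_odd_unit: assumes d: "d \<in> {2, 10, -2, -10}" and u: "odd (fst u)" "odd (snd u)" and G: "pi_dvd 5 G"
  shows "\<exists>y. zunit y \<and> in_H d (G + zmul d u (zpow d y 4 - (1,0)))"
proof (cases "in_H d G")
  case True
  then show ?thesis by (intro exI[of _ "(1,0)"]) (simp add: zunit_def zpow_one)
next
  case False
  have de: "even d" using admissible_mod4[OF d] by presburger
  obtain y where y: "zunit y" "pi_dvd 9 (zpow d y 4 - (1,0) - H_witness d)" using fourth_root_mod_pi9[OF d in_H_H_witness] by blast
  note hs = H_witness_mult_odd[OF admissible_mod4[OF d] u]
  have c: "in_H d (G + zmul d u (H_witness d))" using in_H_index2[OF G hs[THEN conjunct1] False hs[THEN conjunct2]] .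
  have "pi_dvd 9 (zmul d u (zpow d y 4 - (1,0) - H_witness d))" using pi_dvd_mul_right[OF de y(2)] .
  then have "pi_dvd 9 ((G + zmul d u (zpow d y 4 - (1,0))) - (G + zmul d u (H_witness d)))"
    by (simp add: zmul_diff_right zmul_add_right algebra_simps)
  then show ?thesis using in_H_cong c y(1) by blast
qed

lemma subset_sum_dvd4: assumes "odd (p::int)" "odd q" "odd r"
  shows "\<exists>c1 c2 c3. c1 \<in> {0,1} \<and> c2 \<in> {0,1} \<and> c3 \<in> {0,1} \<and> 4 dvd t + c1 * p + c2 * q + c3 * r"
proof -
  have "4 dvd t \<or> 4 dvd t + p \<or> 4 dvd t + q \<or> 4 dvd t + r \<or> 4 dvd t + p + q \<or> 4 dvd t + p + r
    \<or> 4 dvd t + q + r \<or> 4 dvd t + p + q + r" using assms by presburger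
  then show ?thesis
    apply (elim disjE)
    apply (rule exI[of _ 0], rule exI[of _ 0], rule exI[of _ 0], simp)
    apply (rule exI[of _ 1], rule exI[of _ 0], rule exI[of _ 0], simp)
    apply (rule exI[of _ 0], rule exI[of _ 1], rule exI[of _ 0], simp)
    apply (rule exI[of _ 0], rule exI[of _ 0], rule exI[of _ 1], simp)
    apply (rule exI[of _ 1], rule exI[of _ 1], rule exI[of _ 0], simp)
    apply (rule exI[of _ 1], rule exI[of _ 0], rule exI[of _ 1], simp)
    apply (rule exI[of _ 0], rule exI[of _ 1], rule exI[of _ 1], simp add: add.assoc)
    apply (rule exI[of _ 1], rule exI[of _ 1], rule exI[of _ 1], simp)
    done
qed

definition lin_form :: "int \<Rightarrow> zsqrt \<Rightarrow> int" where "lin_form \<kappa> x = fst x + 2 * \<kappa> * snd x"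

lemma zpow4_pi_coeff: "c \<in> {0,1} \<Longrightarrow> zpow d (0, c) 4 = (c * d * d, 0)"
  by (auto simp: zpow4 zmul_def)
lemma zpow4_eps: "c \<in> {0,1} \<Longrightarrow> zpow d (c, 0) 4 = (c, 0)"
  by (auto simp: zpow4 zmul_def)

text \<open>The free terms V y^4 and u (c \<surd>d)^4 = c d^2 u with y, c \<in> {0, 1}: V, of valuation 3,
  corrects the \<surd>d-coordinate modulo 4, and as d^2 = 4 \<cdot> odd the c_i u_i correct the linear
  form modulo 16. For \<kappa> = 0 resp. 1 the linear form is H_form d for d \<equiv> 2 resp. 6 (mod 8).\<close>

lemma choose_small_terms:
  assumes \<kappa>: "\<kappa> \<in> {0,1}" and d: "d mod 4 = 2" and S: "4 dvd lin_form \<kappa> S" "even (snd S)" and V: "pi_exact 3 V"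
    and u: "odd (fst u5)" "odd (fst u6)" "odd (fst u7)"
  shows "\<exists>\<epsilon> c5 c6 c7. \<epsilon> \<in> {0,1} \<and> c5 \<in> {0,1} \<and> c6 \<in> {0,1} \<and> c7 \<in> {0,1} \<and>
     16 dvd lin_form \<kappa> (S + zmul d V (\<epsilon>, 0) + zmul d u5 (c5*d*d, 0) + zmul d u6 (c6*d*d, 0) + zmul d u7 (c7*d*d, 0))
   \<and> 4 dvd snd (S + zmul d V (\<epsilon>, 0) + zmul d u5 (c5*d*d, 0) + zmul d u6 (c6*d*d, 0) + zmul d u7 (c7*d*d, 0))"
proof -
  obtain e where e: "d = 2 * e" "odd e" using d_mod4_half[OF d] by blast
  define E where "E = e * e"
  have dd: "d * d = 4 * E" using e by (simp add: E_def)
  have oE: "odd E" using e by (simp add: E_def)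
  obtain v1 v2 where v: "V = (v1, v2)" by (cases V)
  have vv: "4 dvd v1" "2 dvd v2" "\<not> 4 dvd v2"
    using V v by (auto simp: pi_exact_def pi_dvd_def)
  define \<epsilon> :: int where "\<epsilon> = (if 4 dvd snd S then 0 else 1)"
  have eps: "\<epsilon> \<in> {0,1}" by (simp add: \<epsilon>_def)
  have snd4: "4 dvd snd S + \<epsilon> * v2" using S(2) vv unfolding \<epsilon>_def by (cases "4 dvd snd S") (simp_all, presburger)
  have psV: "4 dvd v1 + 2 * \<kappa> * v2" using vv \<kappa> by auto
  have "4 dvd lin_form \<kappa> S + \<epsilon> * (v1 + 2 * \<kappa> * v2)" using S(1) psV by simp
  then obtain t where t: "lin_form \<kappa> S + \<epsilon> * (v1 + 2 * \<kappa> * v2) = 4 * t" by blast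
  have op: "odd (E * lin_form \<kappa> u5)" "odd (E * lin_form \<kappa> u6)" "odd (E * lin_form \<kappa> u7)"
    using oE u by (simp_all add: lin_form_def)
  obtain c5 c6 c7 where c: "c5 \<in> {0,1}" "c6 \<in> {0,1}" "c7 \<in> {0,1}"
    "4 dvd t + c5 * (E * lin_form \<kappa> u5) + c6 * (E * lin_form \<kappa> u6) + c7 * (E * lin_form \<kappa> u7)"
    using subset_sum_dvd4[OF op, of t] by blast
  define G where "G = S + zmul d V (\<epsilon>, 0) + zmul d u5 (c5*d*d, 0) + zmul d u6 (c6*d*d, 0) + zmul d u7 (c7*d*d, 0)"
  have "lin_form \<kappa> G = 4 * (t + c5 * (E * lin_form \<kappa> u5) + c6 * (E * lin_form \<kappa> u6) + c7 * (E * lin_form \<kappa> u7))"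
  proof -
    have "lin_form \<kappa> G = lin_form \<kappa> S + \<epsilon> * (v1 + 2 * \<kappa> * v2) + (d * d) * (c5 * lin_form \<kappa> u5 + c6 * lin_form \<kappa> u6 + c7 * lin_form \<kappa> u7)"
      unfolding G_def v by (simp add: lin_form_def algebra_simps)
    also have "\<dots> = 4 * (t + c5 * (E * lin_form \<kappa> u5) + c6 * (E * lin_form \<kappa> u6) + c7 * (E * lin_form \<kappa> u7))"
      unfolding t dd by (simp add: algebra_simps)
    finally show ?thesis .
  qed
  then have g1: "16 dvd lin_form \<kappa> G" using c(4) by (metis mult_dvd_mono dvd_refl numeral_times_numeral semiring_norm(12) semiring_norm(13) semiring_norm(14))
  have "snd G = (snd S + \<epsilon> * v2) + (d * d) * (c5 * snd u5 + c6 * snd u6 + c7 * snd u7)"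
    unfolding G_def v by (simp add: algebra_simps)
  then have "snd G = (snd S + \<epsilon> * v2) + 4 * (E * (c5 * snd u5 + c6 * snd u6 + c7 * snd u7))"
    unfolding dd by simp
  then have g2: "4 dvd snd G" using snd4 by simp
  show ?thesis using eps c g1 g2 unfolding G_def by blast
qed

abbreviation diag8 :: "int \<Rightarrow> zsqrt \<Rightarrow> zsqrt \<Rightarrow> zsqrt \<Rightarrow> zsqrt \<Rightarrow> zsqrt \<Rightarrow> zsqrt \<Rightarrow> zsqrt \<Rightarrow>
    zsqrt \<Rightarrow> zsqrt \<Rightarrow> zsqrt \<Rightarrow> zsqrt \<Rightarrow> zsqrt \<Rightarrow> zsqrt \<Rightarrow> zsqrt \<Rightarrow> zsqrt \<Rightarrow> zsqrt \<Rightarrow> zsqrt" where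
  "diag8 d u1 u2 u3 u4 u5 u6 u7 V y1 y2 y3 y4 y5 y6 y7 y8 \<equiv>
     zmul d u1 (zpow d y1 4) + zmul d u2 (zpow d y2 4) + zmul d u3 (zpow d y3 4) + zmul d u4 (zpow d y4 4)
   + zmul d u5 (zpow d y5 4) + zmul d u6 (zpow d y6 4) + zmul d u7 (zpow d y7 4) + zmul d V (zpow d y8 4)"

lemma H_form_lin_form: "H_form d x = lin_form (if d mod 8 = 2 then 0 else 1) x"
  by (simp add: H_form_def lin_form_def)

lemma solve_mod_pi9_even:
  assumes d: "d \<in> {2, 10, -2, -10}" and u: "odd (fst u1)" "odd (fst u2)" "odd (fst u3)" "odd (fst u4)"
    "odd (fst u5)" "odd (fst u6)" "odd (fst u7)"
    and t: "even (snd u1)" "even (snd u2)" "even (snd u3)" "even (snd u4)"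
    and S: "4 dvd fst (u1 + u2 + u3 + u4)" and V: "pi_exact 3 V"
  shows "\<exists>y1 y2 y3 y4 y5 y6 y7 y8. zunit y1 \<and> pi_dvd 9 (diag8 d u1 u2 u3 u4 u5 u6 u7 V y1 y2 y3 y4 y5 y6 y7 y8)"
proof -
  define \<kappa> :: int where "\<kappa> = (if d mod 8 = 2 then 0 else 1)"
  have k: "\<kappa> \<in> {0,1}" by (simp add: \<kappa>_def)
  define S where "S = u1 + u2 + u3 + u4"
  have Se: "even (snd S)" using t by (simp add: S_def)
  have S4: "4 dvd lin_form \<kappa> S"
  proof -
    obtain m where m: "snd S = 2 * m" using Se by blast
    have "lin_form \<kappa> S = fst S + 4 * (\<kappa> * m)" by (simp add: lin_form_def m)
    moreover have "4 dvd fst S" using S by (simp add: S_def)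
    ultimately show ?thesis by simp
  qed
  obtain \<epsilon> c5 c6 c7 where c: "\<epsilon> \<in> {0,1}" "c5 \<in> {0,1}" "c6 \<in> {0,1}" "c7 \<in> {0,1}"
    "16 dvd lin_form \<kappa> (S + zmul d V (\<epsilon>, 0) + zmul d u5 (c5*d*d, 0) + zmul d u6 (c6*d*d, 0) + zmul d u7 (c7*d*d, 0))"
    "4 dvd snd (S + zmul d V (\<epsilon>, 0) + zmul d u5 (c5*d*d, 0) + zmul d u6 (c6*d*d, 0) + zmul d u7 (c7*d*d, 0))"
    using choose_small_terms[OF k admissible_mod4[OF d] S4 Se V u(5-7)] by blast
  define G where "G = S + zmul d V (\<epsilon>, 0) + zmul d u5 (c5*d*d, 0) + zmul d u6 (c6*d*d, 0) + zmul d u7 (c7*d*d, 0)"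
  have g1: "16 dvd lin_form \<kappa> G" and g2: "4 dvd snd G" using c(5,6) unfolding G_def by auto
  have "8 dvd fst G"
  proof -
    obtain m where m: "snd G = 4 * m" using g2 by blast
    have "fst G = lin_form \<kappa> G - 8 * (\<kappa> * m)" using m by (simp add: lin_form_def)
    moreover have "8 dvd lin_form \<kappa> G" using g1 by (rule dvd_trans[rotated]) simp
    ultimately show ?thesis by simp
  qed
  then have GH: "in_H d G" using g1 g2 by (simp add: in_H_def pi_dvd5_iff H_form_lin_form \<kappa>_def)
  obtain y where y: "zunit y" "pi_dvd 9 (G + zmul d u1 (zpow d y 4 - (1,0)))"
    using adjust_even_unit[OF d u(1) t(1) GH] by blast
  have "diag8 d u1 u2 u3 u4 u5 u6 u7 V y (1,0) (1,0) (1,0) (0,c5) (0,c6) (0,c7) (\<epsilon>,0) = G + zmul d u1 (zpow d y 4 - (1,0))"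
    using c(1-4) by (simp add: zpow_one zpow4_pi_coeff zpow4_eps G_def S_def zmul_diff_right algebra_simps)
  then show ?thesis using y by metis
qed

lemma solve_mod_pi9_mixed:
  assumes d: "d \<in> {2, 10, -2, -10}" and u: "odd (fst u1)" "odd (fst u2)" "odd (fst u3)" "odd (fst u4)"
    "odd (fst u5)" "odd (fst u6)" "odd (fst u7)"
    and t: "even (snd u1)" "odd (snd u3)" "even (snd (u1 + u2 + u3 + u4))"
    and S: "4 dvd fst (u1 + u2 + u3 + u4)" and V: "pi_exact 3 V"
  shows "\<exists>y1 y2 y3 y4 y5 y6 y7 y8. zunit y1 \<and> pi_dvd 9 (diag8 d u1 u2 u3 u4 u5 u6 u7 V y1 y2 y3 y4 y5 y6 y7 y8)"
proof -
  define S where "S = u1 + u2 + u3 + u4"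
  have S4: "4 dvd lin_form 0 S" using S by (simp add: lin_form_def S_def)
  obtain \<epsilon> c5 c6 c7 where c: "\<epsilon> \<in> {0,1}" "c5 \<in> {0,1}" "c6 \<in> {0,1}" "c7 \<in> {0,1}"
    "16 dvd lin_form 0 (S + zmul d V (\<epsilon>, 0) + zmul d u5 (c5*d*d, 0) + zmul d u6 (c6*d*d, 0) + zmul d u7 (c7*d*d, 0))"
    "4 dvd snd (S + zmul d V (\<epsilon>, 0) + zmul d u5 (c5*d*d, 0) + zmul d u6 (c6*d*d, 0) + zmul d u7 (c7*d*d, 0))"
    using choose_small_terms[of 0, OF _ admissible_mod4[OF d] S4 _ V u(5-7)] t(3) by (auto simp: S_def)
  define G where "G = S + zmul d V (\<epsilon>, 0) + zmul d u5 (c5*d*d, 0) + zmul d u6 (c6*d*d, 0) + zmul d u7 (c7*d*d, 0)"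
  have g1: "16 dvd fst G" and g2: "4 dvd snd G" using c(5,6) unfolding G_def lin_form_def by auto
  have "8 dvd fst G" using g1 by (rule dvd_trans[rotated]) simp
  then have G5: "pi_dvd 5 G" using g2 by (simp add: pi_dvd5_iff)
  obtain y3 where y3: "zunit y3" "in_H d (G + zmul d u3 (zpow d y3 4 - (1,0)))"
    using adjust_odd_unit[OF d u(3) t(2) G5] by blast
  obtain y where y: "zunit y" "pi_dvd 9 ((G + zmul d u3 (zpow d y3 4 - (1,0))) + zmul d u1 (zpow d y 4 - (1,0)))"
    using adjust_even_unit[OF d u(1) t(1) y3(2)] by blast
  have "diag8 d u1 u2 u3 u4 u5 u6 u7 V y (1,0) y3 (1,0) (0,c5) (0,c6) (0,c7) (\<epsilon>,0)
      = (G + zmul d u3 (zpow d y3 4 - (1,0))) + zmul d u1 (zpow d y 4 - (1,0))"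
    using c(1-4) by (simp add: zpow_one zpow4_pi_coeff zpow4_eps G_def S_def zmul_diff_right algebra_simps)
  then show ?thesis using y by metis
qed

text \<open>Multiplying the form by the unit 1 + \<surd>d makes the \<surd>d-coordinates of u_1, ..., u_4 even.\<close>

lemma solve_mod_pi9_odd:
  assumes d: "d \<in> {2, 10, -2, -10}" and u: "odd (fst u1)" "odd (fst u2)" "odd (fst u3)" "odd (fst u4)"
    "odd (fst u5)" "odd (fst u6)" "odd (fst u7)"
    and t: "odd (snd u1)" "odd (snd u2)" "odd (snd u3)" "odd (snd u4)"
    and S: "4 dvd fst (u1 + u2 + u3 + u4)" "even (snd (u1 + u2 + u3 + u4))" and V: "pi_exact 3 V"
  shows "\<exists>y1 y2 y3 y4 y5 y6 y7 y8. zunit y1 \<and> pi_dvd 9 (diag8 d u1 u2 u3 u4 u5 u6 u7 V y1 y2 y3 y4 y5 y6 y7 y8)"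
proof -
  have d4: "d mod 4 = 2" using admissible_mod4[OF d] .
  have de: "even d" using d4 by presburger
  define l :: zsqrt where "l = (1, 1)"
  have l: "pi_exact 0 l" using zunit_iff_pi_exact[of l] by (simp add: l_def zunit_def)
  have lu: "odd (fst (zmul d l u))" if "odd (fst u)" for u using that de by (simp add: l_def)
  have lt: "even (snd (zmul d l u))" if "odd (fst u)" "odd (snd u)" for u using that by (simp add: l_def)
  have S': "4 dvd fst (zmul d l u1 + zmul d l u2 + zmul d l u3 + zmul d l u4)"
  proof -
    have "fst (zmul d l u1 + zmul d l u2 + zmul d l u3 + zmul d l u4) = fst (u1 + u2 + u3 + u4) + d * snd (u1 + u2 + u3 + u4)"
      by (simp add: l_def algebra_simps)
    moreover have "4 dvd d * snd (u1 + u2 + u3 + u4)" using de S(2) by (metis mult_dvd_mono numeral_Bit0_eq_double mult_2 evenE)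
    ultimately show ?thesis using S(1) by simp
  qed
  have V': "pi_exact 3 (zmul d l V)" using pi_exact_mul[OF d4 l V] by simp
  obtain y1 y2 y3 y4 y5 y6 y7 y8 where y: "zunit y1"
    "pi_dvd 9 (diag8 d (zmul d l u1) (zmul d l u2) (zmul d l u3) (zmul d l u4) (zmul d l u5) (zmul d l u6) (zmul d l u7) (zmul d l V) y1 y2 y3 y4 y5 y6 y7 y8)"
    using solve_mod_pi9_even[OF d lu[OF u(1)] lu[OF u(2)] lu[OF u(3)] lu[OF u(4)] lu[OF u(5)] lu[OF u(6)] lu[OF u(7)]
      lt[OF u(1) t(1)] lt[OF u(2) t(2)] lt[OF u(3) t(3)] lt[OF u(4) t(4)] S' V'] by blast
  have "diag8 d (zmul d l u1) (zmul d l u2) (zmul d l u3) (zmul d l u4) (zmul d l u5) (zmul d l u6) (zmul d l u7) (zmul d l V) y1 y2 y3 y4 y5 y6 y7 y8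
    = zmul d l (diag8 d u1 u2 u3 u4 u5 u6 u7 V y1 y2 y3 y4 y5 y6 y7 y8)"
    by (simp add: zmul_add_right zmul_assoc)
  then have "pi_dvd (0 + 9) (zmul d l (diag8 d u1 u2 u3 u4 u5 u6 u7 V y1 y2 y3 y4 y5 y6 y7 y8))" using y(2) by simp
  then have "pi_dvd 9 (diag8 d u1 u2 u3 u4 u5 u6 u7 V y1 y2 y3 y4 y5 y6 y7 y8)" by (rule pi_dvd_cancel[OF d4 l])
  then show ?thesis using y(1) by blast
qed

lemma diag8_as_sum:
  assumes dist: "distinct [i1, i2, i3, i4, i5, i6, i7]" and I: "I = {i1, i2, i3, i4, i5, i6, i7}"
    and h: "zunit y1" "pi_dvd 9 (diag8 d (u i1) (u i2) (u i3) (u i4) (u i5) (u i6) (u i7) V y1 y2 y3 y4 y5 y6 y7 y8)"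
  shows "\<exists>y y8. \<exists>i0\<in>I. zunit (y i0) \<and> pi_dvd 9 ((\<Sum>k\<in>I. zmul d (u k) (zpow d (y k) 4)) + zmul d V (zpow d y8 4))"
proof -
  define y where "y m = (if m = i1 then y1 else if m = i2 then y2 else if m = i3 then y3 else if m = i4 then y4
     else if m = i5 then y5 else if m = i6 then y6 else y7)" for m
  have ne: "i1 \<noteq> i2" "i1 \<noteq> i3" "i1 \<noteq> i4" "i1 \<noteq> i5" "i1 \<noteq> i6" "i1 \<noteq> i7" "i2 \<noteq> i3"
    "i2 \<noteq> i4" "i2 \<noteq> i5" "i2 \<noteq> i6" "i2 \<noteq> i7" "i3 \<noteq> i4" "i3 \<noteq> i5" "i3 \<noteq> i6"
    "i3 \<noteq> i7" "i4 \<noteq> i5" "i4 \<noteq> i6" "i4 \<noteq> i7" "i5 \<noteq> i6" "i5 \<noteq> i7" "i6 \<noteq> i7"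
    using dist by auto
  have yv: "y i1 = y1" "y i2 = y2" "y i3 = y3" "y i4 = y4" "y i5 = y5" "y i6 = y6" "y i7 = y7"
    using ne by (simp_all add: y_def)
  have "(\<Sum>k\<in>I. zmul d (u k) (zpow d (y k) 4)) + zmul d V (zpow d y8 4)
     = diag8 d (u i1) (u i2) (u i3) (u i4) (u i5) (u i6) (u i7) V y1 y2 y3 y4 y5 y6 y7 y8"
    using ne unfolding I by (simp add: yv add.assoc)
  moreover have "i1 \<in> I" using I by simp
  ultimately show ?thesis using h yv(1) by metis
qed

lemma pigeonhole_pair:
  assumes "finite C" "card C < card A" "f ` A \<subseteq> C"
  obtains i j where "i \<in> A" "j \<in> A" "i \<noteq> j" "f i = f j"
proof -
  have "card (f ` A) < card A" using card_mono[OF assms(1,3)] assms(2) by linarith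
  then have "\<not> inj_on f A" by (rule pigeonhole)
  then show ?thesis using that unfolding inj_on_def by blast
qed

lemma two_disjoint_pairs:
  assumes I: "finite I" "card I = 7" and C: "finite C" "card C \<le> 4" "f ` I \<subseteq> C"
  obtains i j k l p q r where "distinct [i, j, k, l, p, q, r]" "I = {i, j, k, l, p, q, r}"
    "f i = f j" "f k = f l"
proof -
  obtain i j where ij: "i \<in> I" "j \<in> I" "i \<noteq> j" "f i = f j"
    using pigeonhole_pair[OF C(1), of I f] C I by auto
  define I' where "I' = I - {i, j}"
  have "card C < card I'" using I ij C(2) by (simp add: I'_def card_Diff_subset)
  moreover have "f ` I' \<subseteq> C" using C(3) unfolding I'_def by auto
  ultimately obtain k l where kl: "k \<in> I'" "l \<in> I'" "k \<noteq> l" "f k = f l"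
    using pigeonhole_pair[OF C(1)] by metis
  define R where "R = I - {i, j, k, l}"
  have sub: "{i, j, k, l} \<subseteq> I" and c4: "card {i, j, k, l} = 4" using ij kl unfolding I'_def by auto
  have "card R = 3" unfolding R_def using card_Diff_subset[OF finite_subset[OF sub I(1)] sub] c4 I by simp
  then obtain p q r where R: "R = {p, q, r}" "p \<noteq> q" "q \<noteq> r" "p \<noteq> r" by (auto simp: card_3_iff)
  have "distinct [i, j, k, l, p, q, r]" "I = {i, j, k, l, p, q, r}"
    using R ij kl unfolding R_def I'_def by auto
  then show ?thesis using that ij(4) kl(4) by blast
qed

text \<open>Two disjoint pairs of the units are congruent modulo \<pi>^3, so their sum S has rational
  coordinate divisible by 4 and even \<surd>d-coordinate; the parities of the \<surd>d-coordinates of the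
  pairs decide which of the three cases applies.\<close>

lemma solve_mod_pi9:
  assumes d: "d \<in> {2, 10, -2, -10}" and fI: "finite I" and cI: "card I = 7"
    and u: "\<forall>k\<in>I. zunit (u k)" and V: "pi_exact 3 V"
  shows "\<exists>y y8. \<exists>i0\<in>I. zunit (y i0) \<and> pi_dvd 9 ((\<Sum>k\<in>I. zmul d (u k) (zpow d (y k) 4)) + zmul d V (zpow d y8 4))"
proof -
  define cl where "cl k = (fst (u k) mod 4, snd (u k) mod 2)" for k
  have o: "odd (fst (u m))" if "m \<in> I" for m using u that by (simp add: zunit_def)
  have "cl ` I \<subseteq> {1,3} \<times> {0,1}"
  proof
    fix c assume "c \<in> cl ` I"
    then obtain k where "k \<in> I" "c = cl k" by blast
    moreover have "fst (u k) mod 4 = 1 \<or> fst (u k) mod 4 = 3" using o[OF \<open>k \<in> I\<close>] by presburger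
    moreover have "snd (u k) mod 2 = 0 \<or> snd (u k) mod 2 = 1" by presburger
    ultimately show "c \<in> {1,3} \<times> {0,1}" by (auto simp: cl_def)
  qed
  moreover have "card ({1,3::int} \<times> {0,1::int}) \<le> 4" by (simp add: card_cartesian_product)
  ultimately obtain i j k l p q r where dist: "distinct [i, j, k, l, p, q, r]" and I: "I = {i, j, k, l, p, q, r}"
    and ij: "cl i = cl j" and kl: "cl k = cl l"
    using two_disjoint_pairs[OF fI cI, of "{1,3} \<times> {0,1}" cl] by blast
  have memb: "i \<in> I" "j \<in> I" "k \<in> I" "l \<in> I" "p \<in> I" "q \<in> I" "r \<in> I" using I by auto
  note oi = o[OF memb(1)] o[OF memb(2)] o[OF memb(3)] o[OF memb(4)] o[OF memb(5)] o[OF memb(6)] o[OF memb(7)]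
  have S4: "4 dvd fst (u i + u j + u k + u l)"
    using ij kl oi(1-4) unfolding cl_def by simp presburger
  have S2: "even (snd (u i + u j + u k + u l))" using ij kl unfolding cl_def by simp presburger
  have bj: "even (snd (u j)) \<longleftrightarrow> even (snd (u i))" using ij unfolding cl_def by simp presburger
  have bl: "even (snd (u l)) \<longleftrightarrow> even (snd (u k))" using kl unfolding cl_def by simp presburger
  show ?thesis
  proof (cases "even (snd (u i))"; cases "even (snd (u k))")
    assume ti: "even (snd (u i))" and tk: "even (snd (u k))"
    obtain y1 y2 y3 y4 y5 y6 y7 y8 where "zunit y1"
        "pi_dvd 9 (diag8 d (u i) (u j) (u k) (u l) (u p) (u q) (u r) V y1 y2 y3 y4 y5 y6 y7 y8)"
      using solve_mod_pi9_even[OF d oi ti bj[THEN iffD2, OF ti] tk bl[THEN iffD2, OF tk] S4 V] by blast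
    then show ?thesis by (rule diag8_as_sum[OF dist I])
  next
    assume ti: "even (snd (u i))" and tk: "odd (snd (u k))"
    obtain y1 y2 y3 y4 y5 y6 y7 y8 where "zunit y1"
        "pi_dvd 9 (diag8 d (u i) (u j) (u k) (u l) (u p) (u q) (u r) V y1 y2 y3 y4 y5 y6 y7 y8)"
      using solve_mod_pi9_mixed[OF d oi ti tk S2 S4 V] by blast
    then show ?thesis by (rule diag8_as_sum[OF dist I])
  next
    assume ti: "odd (snd (u i))" and tk: "even (snd (u k))"
    have "4 dvd fst (u k + u l + u i + u j)" "even (snd (u k + u l + u i + u j))"
      using S4 S2 by (simp_all add: algebra_simps)
    then obtain y1 y2 y3 y4 y5 y6 y7 y8 where "zunit y1"
        "pi_dvd 9 (diag8 d (u k) (u l) (u i) (u j) (u p) (u q) (u r) V y1 y2 y3 y4 y5 y6 y7 y8)"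
      using solve_mod_pi9_mixed[OF d oi(3,4,1,2,5-7) tk ti _ _ V] by blast
    moreover have "distinct [k, l, i, j, p, q, r]" "I = {k, l, i, j, p, q, r}" using dist I by auto
    ultimately show ?thesis using diag8_as_sum[of k l i j p q r I] by blast
  next
    assume ti: "odd (snd (u i))" and tk: "odd (snd (u k))"
    obtain y1 y2 y3 y4 y5 y6 y7 y8 where "zunit y1"
        "pi_dvd 9 (diag8 d (u i) (u j) (u k) (u l) (u p) (u q) (u r) V y1 y2 y3 y4 y5 y6 y7 y8)"
      using solve_mod_pi9_odd[OF d oi ti _ tk _ S4 S2 V] bj bl ti tk by blast
    then show ?thesis by (rule diag8_as_sum[OF dist I])
  qed
qed

section \<open>Lifting to a 2-adic solution\<close>

lemma common_level_shift:
  assumes fA: "finite A" and lev: "\<And>m. m \<in> A \<Longrightarrow> int (c m) mod 4 = (j + int (e m)) mod 4"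
  obtains T C where "\<And>m. m \<in> A \<Longrightarrow> c m + 4 * T m = C + e m"
proof -
  define C where "C = 4 * (\<Sum>m\<in>A. c m) + nat (j mod 4)"
  define T where "T m = (C + e m - c m) div 4" for m
  have "c m + 4 * T m = C + e m" if m: "m \<in> A" for m
  proof -
    have le: "c m \<le> C" using member_le_sum[OF m, of c] fA unfolding C_def by simp
    then have "int (C + e m - c m) = 4 * int (\<Sum>m\<in>A. c m) + j mod 4 + int (e m) - int (c m)"
      by (simp add: C_def)
    then have "4 dvd int (C + e m - c m)" using lev[OF m] by presburger
    then have "4 dvd C + e m - c m" by presburger
    then show ?thesis using le unfolding T_def by simp
  qed
  then show ?thesis using that by blast
qed

lemma pi_exact_scale_to_pow2:
  assumes d: "d mod 4 = 2" and b: "pi_exact (C + e) b"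
  obtains u where "pi_exact e u" "zmul d (zpow d (0, 1) (3 * C)) b = zmul d (2^(2*C), 0) u"
proof -
  have "pi_exact (3 * C + (C + e)) (zmul d (zpow d (0, 1) (3 * C)) b)"
    using pi_exact_mul[OF d pi_exact_pi_pow[OF d] b] .
  then have e: "pi_exact (2 * (2 * C) + e) (zmul d (zpow d (0, 1) (3 * C)) b)"
    by (simp add: algebra_simps)
  obtain u where u: "zmul d (zpow d (0, 1) (3 * C)) b = (2^(2*C) * fst u, 2^(2*C) * snd u)"
    using pi_dvd_even_factor[OF pi_exact_imp_dvd[OF e, THEN pi_dvd_mono[of _ _ "2 * (2 * C)"]]] by auto
  have "pi_exact e u" using e unfolding u pi_exact_pow2 .
  then show ?thesis using that u by (simp add: zmul_pow2)
qed

lemma coherent_pi_dvd_propagate: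
  assumes "coherent Q" "pi_dvd k (Q n1)" "k \<le> 2 * n1" "n1 \<le> n"
  shows "pi_dvd k (Q n)"
proof -
  have "pi_dvd k (Q n - Q n1)" using pi_dvd_mono[OF coherent_le[OF assms(1,4)] assms(3)] .
  from pi_dvd_add[OF this assms(2)] show ?thesis by simp
qed

text \<open>Multiplying by \<pi>^(3C) turns the seven coefficients of valuation C into 2^(2C) times units
  and the eighth into 2^(2C) times an element of valuation 3, so that the congruence modulo \<pi>^9
  for units applies.\<close>

lemma scaled_solution_mod:
  assumes d: "d \<in> {2, 10, -2, -10}" and fI: "finite I" and cI: "card I = 7" and sI: "s \<notin> I"
    and cB: "\<And>m. m \<in> insert s I \<Longrightarrow> coherent (B m)"
    and exB: "\<And>m. m \<in> I \<Longrightarrow> pi_exact C (B m n1)" and exBs: "pi_exact (C + 3) (B s n1)"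
    and n1: "C + 9 \<le> 2 * n1"
  obtains i0 y where "i0 \<in> I" "zunit (y i0)"
    "\<And>n. n1 \<le> n \<Longrightarrow> pi_dvd (C + 9) (\<Sum>m\<in>insert s I. zmul d (B m n) (zpow d (y m) 4))"
proof -
  have d4: "d mod 4 = 2" using admissible_mod4[OF d] .
  have de: "even d" using d4 by presburger
  define F where "F = zpow d (0, 1) (3 * C)"
  define P where "P = zmul d (2^(2*C), 0)"
  have F: "pi_exact (3 * C) F" unfolding F_def using pi_exact_pi_pow[OF d4] .
  have "\<forall>m\<in>I. \<exists>u. zunit u \<and> zmul d F (B m n1) = P u"
    using pi_exact_scale_to_pow2[OF d4, of C 0] exB zunit_iff_pi_exact unfolding F_def P_def by (metis add_0_right)
  then obtain u where u: "\<And>m. m \<in> I \<Longrightarrow> zunit (u m) \<and> zmul d F (B m n1) = P (u m)" by metis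
  obtain V where V: "pi_exact 3 V" "zmul d F (B s n1) = P V"
    using pi_exact_scale_to_pow2[OF d4 exBs] unfolding F_def P_def by blast
  obtain y y8 i0 where y: "i0 \<in> I" "zunit (y i0)"
    "pi_dvd 9 ((\<Sum>k\<in>I. zmul d (u k) (zpow d (y k) 4)) + zmul d V (zpow d y8 4))"
    using solve_mod_pi9[OF d fI cI _ V(1), of u] u by blast
  define yy where "yy m = (if m = s then y8 else y m)" for m
  define Q where "Q n = (\<Sum>m\<in>insert s I. zmul d (B m n) (zpow d (yy m) 4))" for n
  have sum_I: "(\<Sum>m\<in>I. zmul d (zmul d F (B m n1)) (zpow d (yy m) 4))
      = (\<Sum>m\<in>I. zmul d (P (u m)) (zpow d (y m) 4))"
    by (rule sum.cong) (use sI u in \<open>auto simp: yy_def\<close>)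
  have "zmul d F (Q n1) = (\<Sum>m\<in>insert s I. zmul d (zmul d F (B m n1)) (zpow d (yy m) 4))"
    unfolding Q_def by (simp add: zmul_sum_right zmul_assoc)
  also have "\<dots> = (\<Sum>m\<in>I. zmul d (P (u m)) (zpow d (y m) 4)) + zmul d (P V) (zpow d y8 4)"
    using fI sI V(2) by (simp add: sum_I yy_def[of s] add.commute)
  also have "\<dots> = P ((\<Sum>k\<in>I. zmul d (u k) (zpow d (y k) 4)) + zmul d V (zpow d y8 4))"
    unfolding P_def by (simp add: zmul_sum_right zmul_add_right zmul_assoc)
  finally have "zmul d F (Q n1) = P ((\<Sum>k\<in>I. zmul d (u k) (zpow d (y k) 4)) + zmul d V (zpow d y8 4))" .
  moreover have "pi_dvd (2 * (2 * C) + 9) (P ((\<Sum>k\<in>I. zmul d (u k) (zpow d (y k) 4)) + zmul d V (zpow d y8 4)))"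
    unfolding P_def zmul_pow2 pi_dvd_pow2 using y(3) .
  ultimately have "pi_dvd (3 * C + (C + 9)) (zmul d F (Q n1))" by (simp add: algebra_simps)
  then have "pi_dvd (C + 9) (Q n1)" by (rule pi_dvd_cancel[OF d4 F])
  moreover have "coherent Q"
    unfolding Q_def using cB by (intro coherent_sum coherent_zmul[OF de _ coherent_const]) auto
  ultimately have "pi_dvd (C + 9) (Q n)" if "n1 \<le> n" for n
    using coherent_pi_dvd_propagate n1 that by blast
  moreover have "zunit (yy i0)" using y(1,2) sI by (auto simp: yy_def)
  ultimately show ?thesis using that y(1) unfolding Q_def by blast
qed

lemma hensel_diagonal:
  assumes d: "d mod 4 = 2" and fA: "finite A" and i0: "i0 \<in> A"
    and cB: "\<And>m. m \<in> A \<Longrightarrow> coherent (B m)"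
    and exB: "\<And>n. n0 \<le> n \<Longrightarrow> pi_exact c (B i0 n)" and y0: "zunit (y i0)"
    and sol: "\<And>n. n1 \<le> n \<Longrightarrow> pi_dvd (c + 9) (\<Sum>m\<in>A. zmul d (B m n) (zpow d (y m) 4))"
  obtains Y where "coherent Y" "\<And>n. 1 \<le> n \<Longrightarrow> zunit (Y n)"
    "\<And>n. pi_dvd (2*n) (\<Sum>m\<in>A. zmul d (B m n) (zpow d ((y(i0 := Y n)) m) 4))"
proof -
  have de: "even d" using d by presburger
  define T where "T n = - (\<Sum>m\<in>A - {i0}. zmul d (B m n) (zpow d (y m) 4))" for n
  have split: "(\<Sum>m\<in>A. zmul d (B m n) (zpow d ((y(i0 := z)) m) 4)) = zmul d (B i0 n) (zpow d z 4) - T n"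
    for n z
  proof -
    have "(\<Sum>m\<in>A - {i0}. zmul d (B m n) (zpow d ((y(i0 := z)) m) 4))
        = (\<Sum>m\<in>A - {i0}. zmul d (B m n) (zpow d (y m) 4))" by (rule sum.cong) auto
    then show ?thesis unfolding T_def
      using sum.remove[OF fA i0, of "\<lambda>m. zmul d (B m n) (zpow d ((y(i0 := z)) m) 4)"]
      by (simp del: fun_upd_apply add: fun_upd_same)
  qed
  have "coherent T"
    unfolding T_def using cB by (intro coherent_uminus coherent_sum coherent_zmul[OF de _ coherent_const]) auto
  moreover have "pi_dvd (c + 9) (zmul d (B i0 n) (zpow d (y i0) 4) - T n)" if "n1 \<le> n" for n
    using sol[OF that] split[of n "y i0"] by simp
  ultimately obtain Y where "coherent Y" "\<And>n. 1 \<le> n \<Longrightarrow> zunit (Y n)"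
    "\<And>n. pi_dvd (2*n) (zmul d (B i0 n) (zpow d (Y n) 4) - T n)"
    using hensel_coherent[OF d cB[OF i0] _ exB y0] by metis
  then show ?thesis using that split by simp
qed

lemma zpow4_pi_scale: "zpow d (zmul d (zpow d (0, 1) t) w) 4 = zmul d (zpow d (0, 1) (4 * t)) (zpow d w 4)"
  by (simp add: zpow_zmul zpow_mult[symmetric] mult.commute)

lemma unscale_solution:
  assumes d: "d mod 4 = 2" and i0: "i0 \<in> S" and cY: "coherent Y" and uY: "\<And>n. 1 \<le> n \<Longrightarrow> zunit (Y n)"
    and sol: "\<And>n. pi_dvd (2*n) (\<Sum>m\<in>S. zmul d (zmul d (A m n) (zpow d (0, 1) (4 * T m)))
      (zpow d ((y(i0 := Y n)) m) 4))"
  obtains W where "\<And>m. coherent (W m)" "\<And>m. m \<notin> S \<Longrightarrow> W m = (\<lambda>n. 0)"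
    "\<exists>n. \<not> pi_dvd (2*n) (W i0 n)" "\<And>n. pi_dvd (2*n) (\<Sum>m\<in>S. zmul d (A m n) (zpow d (W m n) 4))"
proof -
  have de: "even d" using d by presburger
  define W where "W m n = (if m \<in> S then zmul d (zpow d (0, 1) (T m)) ((y(i0 := Y n)) m) else 0)" for m n
  show ?thesis
  proof (rule that)
    show "coherent (W m)" for m
    proof (cases "m = i0")
      case True
      then have "W m = (\<lambda>n. zmul d (zpow d (0, 1) (T i0)) (Y n))" using i0 by (simp add: W_def fun_eq_iff)
      then show ?thesis using coherent_zmul[OF de coherent_const cY] by simp
    next
      case False
      then have "W m = (\<lambda>n. if m \<in> S then zmul d (zpow d (0, 1) (T m)) (y m) else 0)"
        by (simp add: W_def fun_eq_iff)
      then show ?thesis by (simp add: coherent_const)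
    qed
    show "W m = (\<lambda>n. 0)" if "m \<notin> S" for m using that by (simp add: W_def fun_eq_iff)
    have "pi_exact (T i0 + 0) (W i0 (Suc (T i0)))"
      using pi_exact_mul[OF d pi_exact_pi_pow[OF d] zunit_iff_pi_exact[THEN iffD1, OF uY]] i0
      unfolding W_def by simp
    then have "\<not> pi_dvd (2 * Suc (T i0)) (W i0 (Suc (T i0)))" using pi_exact_not_dvd by simp
    then show "\<exists>n. \<not> pi_dvd (2*n) (W i0 n)" by blast
    fix n
    have "(\<Sum>m\<in>S. zmul d (A m n) (zpow d (W m n) 4))
        = (\<Sum>m\<in>S. zmul d (zmul d (A m n) (zpow d (0, 1) (4 * T m))) (zpow d ((y(i0 := Y n)) m) 4))"
      by (rule sum.cong) (simp_all add: W_def zpow4_pi_scale zmul_assoc del: fun_upd_apply)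
    then show "pi_dvd (2*n) (\<Sum>m\<in>S. zmul d (A m n) (zpow d (W m n) 4))" using sol by simp
  qed
qed

theorem coherent_solution:
  assumes d: "d \<in> {2, 10, -2, -10}" and fI: "finite I" and cI: "card I = 7" and sI: "s \<notin> I"
    and cA: "\<And>m. m \<in> insert s I \<Longrightarrow> coherent (A m)"
    and ex: "\<And>m. m \<in> insert s I \<Longrightarrow> \<forall>\<^sub>F n in sequentially. pi_exact (c m) (A m n)"
    and lev: "\<And>m. m \<in> I \<Longrightarrow> int (c m) mod 4 = j mod 4" and levs: "int (c s) mod 4 = (j + 3) mod 4"
  obtains W where "\<And>m. coherent (W m)" "\<And>m. m \<notin> insert s I \<Longrightarrow> W m = (\<lambda>n. 0)"
    "\<exists>m\<in>I. \<exists>n. \<not> pi_dvd (2*n) (W m n)"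
    "\<And>n. pi_dvd (2*n) (\<Sum>m\<in>insert s I. zmul d (A m n) (zpow d (W m n) 4))"
proof -
  have fI8: "finite (insert s I)" using fI by simp
  have d4: "d mod 4 = 2" using admissible_mod4[OF d] .
  have de: "even d" using d4 by presburger
  have "\<forall>m\<in>insert s I. \<forall>\<^sub>F n in sequentially. pi_exact (c m) (A m n)" using ex by blast
  then have "\<forall>\<^sub>F n in sequentially. \<forall>m\<in>insert s I. pi_exact (c m) (A m n)"
    by (rule eventually_ball_finite[OF fI8])
  then obtain n0 where "\<forall>n\<ge>n0. \<forall>m\<in>insert s I. pi_exact (c m) (A m n)"
    unfolding eventually_sequentially ..
  then have n0: "pi_exact (c m) (A m n)" if "m \<in> insert s I" "n0 \<le> n" for m n using that by blast
  define e where "e m = (if m = s then 3 else 0 :: nat)" for m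
  have "int (c m) mod 4 = (j + int (e m)) mod 4" if "m \<in> insert s I" for m
  proof (cases "m = s")
    case True then show ?thesis using levs by (simp add: e_def)
  next
    case False then show ?thesis using that lev by (simp add: e_def)
  qed
  then obtain C T where CT: "\<And>m. m \<in> insert s I \<Longrightarrow> c m + 4 * T m = C + e m"
    using common_level_shift[OF fI8] by metis
  define B where "B m n = zmul d (A m n) (zpow d (0, 1) (4 * T m))" for m n
  have cB: "coherent (B m)" if "m \<in> insert s I" for m
    unfolding B_def using coherent_zmul[OF de cA[OF that] coherent_const] .
  have exB: "pi_exact (C + e m) (B m n)" if "m \<in> insert s I" "n0 \<le> n" for m n
    unfolding B_def using pi_exact_mul[OF d4 n0[OF that] pi_exact_pi_pow[OF d4], of "4 * T m"]
    CT[OF that(1)] by simp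
  have exI: "pi_exact C (B m n)" if "m \<in> I" "n0 \<le> n" for m n
  proof -
    have "m \<noteq> s" using that(1) sI by blast
    then show ?thesis using exB[OF _ that(2), of m] that(1) unfolding e_def by simp
  qed
  have exs: "pi_exact (C + 3) (B s n)" if "n0 \<le> n" for n using exB[OF _ that, of s] unfolding e_def by simp
  define n1 where "n1 = n0 + C + 9"
  have n0n1: "n0 \<le> n1" unfolding n1_def by simp
  obtain i0 y where y: "i0 \<in> I" "zunit (y i0)"
    "\<And>n. n1 \<le> n \<Longrightarrow> pi_dvd (C + 9) (\<Sum>m\<in>insert s I. zmul d (B m n) (zpow d (y m) 4))"
    using scaled_solution_mod[of d I s B C n1, OF d fI cI sI cB exI[OF _ n0n1] exs[OF n0n1]] unfolding n1_def by auto
  have i0: "i0 \<in> insert s I" "i0 \<noteq> s" using y(1) sI by auto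
  obtain Y where Y: "coherent Y" "\<And>n. 1 \<le> n \<Longrightarrow> zunit (Y n)"
    "\<And>n. pi_dvd (2*n) (\<Sum>m\<in>insert s I. zmul d (B m n) (zpow d ((y(i0 := Y n)) m) 4))"
    using hensel_diagonal[where B = B and y = y, OF d4 fI8 i0(1) cB exI[OF y(1)] y(2,3)] by blast
  obtain W where W: "\<And>m. coherent (W m)" "\<And>m. m \<notin> insert s I \<Longrightarrow> W m = (\<lambda>n. 0)"
    "\<exists>n. \<not> pi_dvd (2*n) (W i0 n)"
    "\<And>n. pi_dvd (2*n) (\<Sum>m\<in>insert s I. zmul d (A m n) (zpow d (W m n) 4))"
    using unscale_solution[OF d4 i0(1) Y(1,2) Y(3)[unfolded B_def]] by blast
  then show ?thesis using that y(1) by blast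
qed

section \<open>Back to K\<close>

lemma coherent_to_K:
  assumes "coherent W"
  shows "K_bounded 0 (K_of_seq (\<lambda>n. ztrunc n (W n)))"
    "pi_dvd (2*n) (K_approx 0 (K_of_seq (\<lambda>n. ztrunc n (W n))) n - W n)"
    "K_of_seq (\<lambda>n. ztrunc n (W n)) = K_zero \<Longrightarrow> pi_dvd (2*n) (W n)"
proof -
  define X where "X n = ztrunc n (W n)" for n
  have cX: "coherent X" unfolding X_def using coherent_ztrunc[OF assms] .
  have rX: "ztrunc n (X n) = X n" for n unfolding X_def by (simp add: ztrunc_ztrunc)
  show "K_bounded 0 (K_of_seq (\<lambda>n. ztrunc n (W n)))" using K_of_seq_approx(1)[OF cX rX] unfolding X_def .
  show "pi_dvd (2*n) (K_approx 0 (K_of_seq (\<lambda>n. ztrunc n (W n))) n - W n)"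
    using K_of_seq_approx(2)[OF cX rX] ztrunc_cong unfolding X_def by simp
  assume "K_of_seq (\<lambda>n. ztrunc n (W n)) = K_zero"
  then have "ztrunc n (W n) = 0" by (rule K_of_seq_eq_zeroD)
  then show "pi_dvd (2*n) (W n)" using ztrunc_cong[of n "W n"] by (simp add: pi_dvd_uminus)
qed

lemma K_diag_form_zero:
  assumes de: "even d" and dist: "distinct is"
    and ba: "\<And>i. i \<in> set is \<Longrightarrow> K_bounded D (a i)" and bx: "\<And>i. i \<in> set is \<Longrightarrow> K_bounded 0 (x i)"
    and N: "length is * (2 * D) \<le> N"
    and approx: "\<And>i n. i \<in> set is \<Longrightarrow> pi_dvd (2*n) (K_approx 0 (x i) n - X i n)"
    and sol: "\<And>n. pi_dvd (2*n) (\<Sum>i\<in>set is. zmul d (K_approx N (a i) n) (zpow d (X i n) 4))"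
  shows "K_sum (\<lambda>i. K_mul d (a i) (K_pow d (x i) 4)) is = K_zero"
proof -
  define f where "f i = K_mul d (a i) (K_pow d (x i) 4)" for i
  note bp = K_pow_approx[OF bx de]
  have bf: "K_bounded (2 * D) (f i)" if "i \<in> set is" for i
    unfolding f_def using K_mul_approx(1)[OF ba[OF that] bp[OF that, THEN conjunct1]] .
  have fi: "pi_dvd (2*n) (K_approx N (f i) n - zmul d (K_approx N (a i) n) (zpow d (X i n) 4))"
    if i: "i \<in> set is" for i n
  proof -
    have "2 * D \<le> N" using N i by (cases "is") auto
    then have a1: "pi_dvd (2*n) (K_approx N (f i) n - zmul d (K_approx N (a i) n) (K_approx 0 (K_pow d (x i) 4) n))"
      unfolding f_def using K_mul_approx(2)[OF ba[OF i] bp[OF i, THEN conjunct1]] by blast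
    have "pi_dvd (2*n) (K_approx 0 (K_pow d (x i) 4) n - zpow d (X i n) 4)"
      using pi_dvd_trans[OF bp[OF i, THEN conjunct2] pi_dvd_cong_zpow[OF de approx[OF i]]] .
    then show ?thesis using pi_dvd_trans[OF a1 pi_dvd_cong_mul[OF de, of "2*n" "K_approx N (a i) n"]] by simp
  qed
  have "pi_dvd (2*n) (K_approx N (K_sum f is) n)" for n
  proof -
    have a: "pi_dvd (2*n) (K_approx N (K_sum f is) n - (\<Sum>i\<in>set is. K_approx N (f i) n))"
      using K_sum_approx(2)[of "is" "2 * D" f N n, OF bf N] by (simp add: sum.distinct_set_conv_list[OF dist])
    have b: "pi_dvd (2*n) ((\<Sum>i\<in>set is. K_approx N (f i) n)
        - (\<Sum>i\<in>set is. zmul d (K_approx N (a i) n) (zpow d (X i n) 4)))"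
      by (rule pi_dvd_cong_sum) (rule fi)
    show ?thesis using pi_dvd_add[OF pi_dvd_add[OF a b] sol[of n]] by simp
  qed
  from K_zero_if_approx_zero[OF K_bounded_mono[OF K_sum_approx(1)[of "is" "2 * D" f, OF bf] N] this]
  show ?thesis unfolding f_def .
qed

lemma K_bounded_common:
  assumes "finite A" "\<And>i. i \<in> A \<Longrightarrow> a i \<in> Kset"
  obtains D where "\<And>i. i \<in> A \<Longrightarrow> K_bounded D (a i)"
proof -
  define D where "D = (\<Sum>i\<in>A. fst (fst (a i)) + fst (snd (a i)))"
  have "K_bounded D (a i)" if i: "i \<in> A" for i
  proof -
    have "fst (fst (a i)) + fst (snd (a i)) \<le> D" unfolding D_def
      by (rule member_le_sum) (use i assms(1) in auto)
    then show ?thesis using assms(2)[OF i] by (cases "a i") (auto simp: K_bounded_def Kset_def)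
  qed
  then show ?thesis using that by blast
qed

lemma type_7001_indices:
  assumes "of_type a {1..11} (\<lambda>i. [7, 0, 0, 1] ! i)"
  obtains I s j where "I \<subseteq> {1..11}" "card I = 7" "s \<in> {1..11}" "s \<notin> I"
    "\<And>m. m \<in> I \<Longrightarrow> level a m = j mod 4" "level a s = (j + 3) mod 4"
proof -
  obtain j where hj: "\<forall>i<4. card {m \<in> {1..11}. level a m = (int i + j) mod 4} \<ge> [7, 0, 0, 1] ! i"
    using assms unfolding of_type_def by blast
  have c0: "card {m \<in> {1..11::nat}. level a m = j mod 4} \<ge> 7" using hj[rule_format, of 0] by simp
  obtain I where I: "I \<subseteq> {m \<in> {1..11::nat}. level a m = j mod 4}" "card I = 7"
    using obtain_subset_with_card_n[OF c0] by blast
  have "card {m \<in> {1..11::nat}. level a m = (3 + j) mod 4} \<ge> 1" using hj[rule_format, of 3] by simp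
  then have "{m \<in> {1..11::nat}. level a m = (3 + j) mod 4} \<noteq> {}" by (metis card.empty not_one_le_zero)
  then obtain s where "s \<in> {1..11}" "level a s = (3 + j) mod 4" by blast
  then have s: "s \<in> {1..11}" "level a s = (j + 3) mod 4" by (simp_all add: add.commute)
  have "s \<notin> I"
  proof
    assume "s \<in> I"
    then have "(j + 3) mod 4 = j mod 4" using I(1) s(2) by auto
    then show False by presburger
  qed
  then show ?thesis using that I s by blast
qed

lemma coherent_solution_of_type:
  assumes hd: "d \<in> {2, 10, -2, -10}" and bD: "\<And>i. i \<in> {1..11} \<Longrightarrow> K_bounded D (a i)"
    and nz: "\<And>i. i \<in> {1..11} \<Longrightarrow> a i \<noteq> K_zero" and htype: "of_type a {1..11} (\<lambda>i. [7, 0, 0, 1] ! i)"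
  obtains W where "\<And>m. coherent (W m)" "\<exists>m\<in>{1..11}. \<exists>n. \<not> pi_dvd (2*n) (W m n)"
    "\<And>n. pi_dvd (2*n) (\<Sum>i\<in>set [1..<12]. zmul d (K_approx (22 * D) (a i) n) (zpow d (W i n) 4))"
proof -
  obtain I s j where I: "I \<subseteq> {1..11}" "card I = 7" "s \<in> {1..11}" "s \<notin> I"
    "\<And>m. m \<in> I \<Longrightarrow> level a m = j mod 4" "level a s = (j + 3) mod 4"
    using type_7001_indices[OF htype] by blast
  define N where "N = 22 * D"
  define c where "c m = nat (K_val (a m) + 2 * int N)" for m
  have DN: "D \<le> N" unfolding N_def by simp
  have cK: "int (c m) = K_val (a m) + 2 * int N" if "m \<in> {1..11}" for m
    unfolding c_def using K_val_approx(1)[OF bD[OF that] nz[OF that] DN] by simp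
  \<comment> \<open>The shift 2N = 44 D does not change levels.\<close>
  have lev: "int (c m) mod 4 = level a m mod 4" if "m \<in> {1..11}" for m
    unfolding cK[OF that] level_def N_def by presburger
  have cA: "coherent (K_approx N (a m))" if "m \<in> insert s I" for m
    using K_approx_coherent[OF bD DN] that I by blast
  have ex: "\<forall>\<^sub>F n in sequentially. pi_exact (c m) (K_approx N (a m) n)" if "m \<in> insert s I" for m
    using K_val_approx(2)[OF bD nz DN] that I unfolding c_def by blast
  have levI: "int (c m) mod 4 = j mod 4" if "m \<in> I" for m using lev I(1,5) that by auto
  have levs: "int (c s) mod 4 = (j + 3) mod 4" using lev I(3,6) by simp
  obtain W where W: "\<And>m. coherent (W m)" "\<And>m. m \<notin> insert s I \<Longrightarrow> W m = (\<lambda>n. 0)"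
    "\<exists>m\<in>I. \<exists>n. \<not> pi_dvd (2*n) (W m n)"
    "\<And>n. pi_dvd (2*n) (\<Sum>m\<in>insert s I. zmul d (K_approx N (a m) n) (zpow d (W m n) 4))"
    using coherent_solution[of d I s "\<lambda>m. K_approx N (a m)" c j, OF hd finite_subset[OF I(1) finite_atLeastAtMost]
      I(2,4) cA ex levI levs] by blast
  show ?thesis
  proof (rule that)
    show "coherent (W m)" for m by (rule W(1))
    show "\<exists>m\<in>{1..11}. \<exists>n. \<not> pi_dvd (2*n) (W m n)" using W(3) I(1) by blast
    fix n
    have "(\<Sum>i\<in>set [1..<12]. zmul d (K_approx N (a i) n) (zpow d (W i n) 4))
        = (\<Sum>m\<in>insert s I. zmul d (K_approx N (a m) n) (zpow d (W m n) 4))"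
      by (rule sum.mono_neutral_right) (use I W(2) in \<open>auto simp: zpow4\<close>)
    then show "pi_dvd (2*n) (\<Sum>i\<in>set [1..<12]. zmul d (K_approx (22 * D) (a i) n) (zpow d (W i n) 4))"
      using W(4)[of n] unfolding N_def by simp
  qed
qed

theorem mainTheorem9:
  fixes d :: int and a :: "nat \<Rightarrow> qk"
  assumes hd: "d \<in> {2, 10, -2, -10}"
    and ha: "\<forall>i\<in>{1..11}. a i \<in> Kset \<and> a i \<noteq> K_zero"
    and htype: "of_type a {1..11} (\<lambda>i. [7, 0, 0, 1] ! i)"
  shows "\<exists>x :: nat \<Rightarrow> qk. (\<forall>i\<in>{1..11}. x i \<in> Kset) \<and> (\<exists>i\<in>{1..11}. x i \<noteq> K_zero)
           \<and> K_sum (\<lambda>i. K_mul d (a i) (K_pow d (x i) 4)) [1..<12] = K_zero"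
proof -
  have de: "even d" using admissible_mod4[OF hd] by presburger
  obtain D where bD: "\<And>i. i \<in> {1..11} \<Longrightarrow> K_bounded D (a i)"
    using K_bounded_common[of "{1..11}" a] ha by auto
  have nz: "\<And>i. i \<in> {1..11} \<Longrightarrow> a i \<noteq> K_zero" using ha by blast
  obtain W where W: "\<And>m. coherent (W m)" "\<exists>m\<in>{1..11}. \<exists>n. \<not> pi_dvd (2*n) (W m n)"
    "\<And>n. pi_dvd (2*n) (\<Sum>i\<in>set [1..<12]. zmul d (K_approx (22 * D) (a i) n) (zpow d (W i n) 4))"
    using coherent_solution_of_type[OF hd bD nz htype] by blast
  define x where "x m = K_of_seq (\<lambda>n. ztrunc n (W m n))" for m
  have "K_sum (\<lambda>i. K_mul d (a i) (K_pow d (x i) 4)) [1..<12] = K_zero"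
    by (rule K_diag_form_zero[OF de, where X = W and D = D and N = "22 * D"])
      (use bD coherent_to_K(1,2)[OF W(1)] W(3) in \<open>auto simp: x_def\<close>)
  moreover have "\<exists>i\<in>{1..11}. x i \<noteq> K_zero" using W(2) coherent_to_K(3)[OF W(1)] unfolding x_def by blast
  moreover have "\<forall>i\<in>{1..11}. x i \<in> Kset" using coherent_to_K(1)[OF W(1)] K_bounded_Kset unfolding x_def by blast
  ultimately show ?thesis by blast
qed

end
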